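(* $\mathcal{C}_2(7,3,2)\le 396$.
   Context: $\mathcal{C}_q(n,k,r)$ is the minimum number of $k$-dimensional subspaces of $\mathbb{F}_q^n$ such that every $r$-dimensional subspace of $\mathbb{F}_q^n$ is contained in at least one of them. *)

theory Defs
  imports "HOL-Analysis.Analysis" "HOL-Library.Z2"
begin

text \<open>q-covering number C_q(n,k,r): ambient space is F^n, modelled as 'a ^ 'n for a
finite field 'a and finite index type 'n with CARD('n) = n.\<close>

definition covering_number ::
  "'a::field itself \<Rightarrow> 'n::finite itself \<Rightarrow> nat \<Rightarrow> nat \<Rightarrow> nat" where
  "covering_number _ _ k r =
     (LEAST m. \<exists>F :: ('a ^ 'n) set set.
        finite F \<and> card F = m \<and>
        (\<forall>U\<in>F. vec.subspace U \<and> vec.dim U = k) \<and>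
        (\<forall>W :: ('a ^ 'n) set. vec.subspace W \<and> vec.dim W = r \<longrightarrow> (\<exists>U\<in>F. W \<subseteq> U)))"

end

theory Submission
  imports Defs
begin

(* The argument has three layers.
   1. A general reduction, valid over any field: a two-dimensional subspace is the span of two
      distinct nonzero vectors, so a family of k-dimensional subspaces covers all of them as soon
      as every two distinct nonzero vectors lie in a common member.
   2. Vectors of GF(2)^7 are encoded as 7-bit numbers below 128, addition becoming bitwise xor.
      A plane with basis a, b, c then has the eight points 0, a, b, c, a+b, a+c, b+c, a+b+c,
      and it is three-dimensional exactly when these eight numbers are distinct.
   3. A finite certificate: a table of the 396 planes (each given by its eight points), checked
      once for being well formed, and for every pair 0 < m < n < 128 the index of a plane
      containing both m and n. *)


section \<open>Covering numbers from pair coverings\<close>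

lemma covering_number_le_card:
  fixes F :: "('a::field ^ 'n::finite) set set"
  assumes "finite F"
    and "\<forall>U\<in>F. vec.subspace U \<and> vec.dim U = k"
    and "\<forall>W :: ('a ^ 'n) set. vec.subspace W \<and> vec.dim W = r \<longrightarrow> (\<exists>U\<in>F. W \<subseteq> U)"
  shows "covering_number TYPE('a) TYPE('n) k r \<le> card F"
  unfolding covering_number_def by (rule Least_le) (use assms in blast)

text \<open>For r = 2 it suffices that every two distinct nonzero vectors lie in a common member:
  a basis of a two-dimensional subspace consists of two such vectors, and a subspace containing
  the basis contains its span.\<close>

lemma covering_number_2_le_card:
  fixes F :: "('a::field ^ 'n::finite) set set"
  assumes "finite F"
    and subspaces: "\<forall>U\<in>F. vec.subspace U \<and> vec.dim U = k"
    and pairs: "\<And>x y. x \<noteq> 0 \<Longrightarrow> y \<noteq> 0 \<Longrightarrow> x \<noteq> y \<Longrightarrow> \<exists>U\<in>F. x \<in> U \<and> y \<in> U"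
  shows "covering_number TYPE('a) TYPE('n) k 2 \<le> card F"
proof (rule covering_number_le_card[OF \<open>finite F\<close> subspaces], intro allI impI)
  fix W :: "('a ^ 'n) set"
  assume W: "vec.subspace W \<and> vec.dim W = 2"
  obtain B where B: "B \<subseteq> W" "vec.independent B" "W \<subseteq> vec.span B" "card B = 2"
    using vec.basis_exists[of W] W by metis
  then obtain x y where xy: "B = {x, y}" "x \<noteq> y" by (auto simp: card_2_iff)
  have "x \<noteq> 0" "y \<noteq> 0" using vec.dependent_zero[of B] B(2) xy(1) by auto
  then obtain U where U: "U \<in> F" "x \<in> U" "y \<in> U" using pairs xy(2) by blast
  then have "vec.span B \<subseteq> U" using subspaces xy(1) by (intro vec.span_minimal) auto
  then show "\<exists>U\<in>F. W \<subseteq> U" using B(3) U(1) by blast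
qed


section \<open>Linear algebra over GF(2)\<close>

lemma bit_cases: "(k::bit) = 0 \<or> k = 1"
  by (cases k) simp_all

lemma bit_span_singleton: "vec.span {u :: bit ^ 'n} \<subseteq> {0, u}"
proof
  fix x assume "x \<in> vec.span {u}"
  then obtain k where "x = k *s u" by (auto simp: vec.span_singleton)
  then show "x \<in> {0, u}" using bit_cases[of k] by auto
qed

lemma bit_span_pair: "vec.span {u :: bit ^ 'n, v} \<subseteq> {0, u, v, u + v}"
proof
  fix x assume "x \<in> vec.span {u, v}"
  then obtain k where "x - k *s u \<in> vec.span {v}" by (auto simp: vec.span_insert)
  then have "x - k *s u \<in> {0, v}" using bit_span_singleton by blast
  then show "x \<in> {0, u, v, u + v}" using bit_cases[of k] by (auto simp: algebra_simps)
qed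

lemma bit_independent_three:
  fixes u v w :: "bit ^ 'n"
  assumes "v \<noteq> 0" "u \<notin> {0, v}" "w \<notin> {0, u, v, u + v}"
  shows "vec.independent {w, u, v}"
proof -
  have "vec.independent {v}" using assms(1) by (simp add: vec.independent_insert)
  moreover have "u \<notin> vec.span {v}" using bit_span_singleton[of v] assms(2) by blast
  ultimately have "vec.independent {u, v}" using assms(2) by (simp add: vec.independent_insert)
  moreover have "w \<notin> vec.span {u, v}" using bit_span_pair[of u v] assms(3) by blast
  ultimately show ?thesis using assms(3) by (simp add: vec.independent_insert)
qed


section \<open>Vectors of GF(2)^7 as 7-bit numbers\<close>

text \<open>The coordinates of the numeral type 7 are identified with the bit positions 0..6, and
  the number m is mapped to the vector of its binary digits.\<close>

definition coord :: "7 \<Rightarrow> nat" where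
  "coord i = nat (Rep_bit1 i)"

definition vec_of_nat :: "nat \<Rightarrow> bit ^ 7" where
  "vec_of_nat m = (\<chi> i. if bit m (coord i) then 1 else 0)"

lemma coord_Abs_bit1: "k < 7 \<Longrightarrow> coord (Abs_bit1 (int k)) = k"
  by (simp add: coord_def Abs_bit1_inverse)

lemma vec_of_nat_0: "vec_of_nat 0 = 0"
  by (simp add: vec_of_nat_def vec_eq_iff)

lemma vec_of_nat_xor: "vec_of_nat (xor m n) = vec_of_nat m + vec_of_nat n"
  by (auto simp: vec_of_nat_def vec_eq_iff bit_xor_iff)

lemma not_bit_above_7:
  assumes "(m::nat) < 128" "7 \<le> k"
  shows "\<not> bit m k"
proof -
  have "(128::nat) = 2 ^ 7" by simp
  also have "\<dots> \<le> 2 ^ k" using assms(2) by (rule power_increasing) simp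
  finally have "m < 2 ^ k" using assms(1) by simp
  then show ?thesis by (simp add: bit_iff_odd)
qed

text \<open>The encoding is a bijection between the numbers below 128 and GF(2)^7: it is injective
  there, and both sets have 128 elements.\<close>

lemma vec_of_nat_inj:
  assumes "m < 128" "n < 128" "vec_of_nat m = vec_of_nat n"
  shows "m = n"
proof (rule bit_eqI)
  fix k
  show "bit m k = bit n k"
  proof (cases "k < 7")
    case True
    have "vec_of_nat m $ Abs_bit1 (int k) = vec_of_nat n $ Abs_bit1 (int k)"
      using assms(3) by simp
    then show ?thesis using True by (simp add: vec_of_nat_def coord_Abs_bit1 split: if_splits)
  next
    case False
    then show ?thesis using not_bit_above_7 assms(1,2) by simp
  qed
qed

lemma card_bit: "CARD(bit) = 2"
proof -
  have "(UNIV :: bit set) = {0, 1}" using bit_cases by blast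
  then show ?thesis by (metis card_2_iff zero_neq_one)
qed

lemma vec_of_nat_surj: "\<exists>m<128. vec_of_nat m = x"
proof -
  have "inj_on vec_of_nat {..<128}" using vec_of_nat_inj by (auto simp: inj_on_def)
  then have "card (vec_of_nat ` {..<128}) = CARD(bit ^ 7)"
    by (simp add: card_image card_bit)
  moreover have "finite (UNIV :: (bit ^ 7) set)"
    by (rule card_ge_0_finite) (simp add: card_bit)
  ultimately have "vec_of_nat ` {..<128} = UNIV" by (intro card_subset_eq) auto
  then show ?thesis by (metis UNIV_I imageE lessThan_iff)
qed


section \<open>Planes given by their points\<close>

definition plane_points :: "nat \<Rightarrow> nat \<Rightarrow> nat \<Rightarrow> nat list" where
  "plane_points a b c = [0, a, b, c, xor a b, xor a c, xor b c, xor (xor a b) c]"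

lemma plane_points_in_span:
  assumes "m \<in> set (plane_points a b c)"
  shows "vec_of_nat m \<in> vec.span {vec_of_nat a, vec_of_nat b, vec_of_nat c}"
    (is "_ \<in> ?S")
proof -
  have basis: "vec_of_nat a \<in> ?S" "vec_of_nat b \<in> ?S" "vec_of_nat c \<in> ?S"
    by (simp_all add: vec.span_base)
  have add: "vec_of_nat (xor p q) \<in> ?S" if "vec_of_nat p \<in> ?S" "vec_of_nat q \<in> ?S" for p q
    unfolding vec_of_nat_xor using that by (rule vec.span_add)
  show ?thesis
    using assms basis add[OF basis(1,2)] add[OF basis(1,3)] add[OF basis(2,3)]
      add[OF add[OF basis(1,2)] basis(3)]
    by (auto simp: plane_points_def vec_of_nat_0 vec.span_zero)
qed

lemma plane_dim:
  assumes "distinct (plane_points a b c)" "\<forall>p\<in>set (plane_points a b c). p < 128"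
  shows "vec.dim (vec.span {vec_of_nat a, vec_of_nat b, vec_of_nat c}) = 3"
proof -
  have small: "a < 128" "b < 128" "c < 128" "xor a b < 128"
    using assms(2) by (simp_all add: plane_points_def)
  have dist: "0 \<noteq> a" "0 \<noteq> b" "0 \<noteq> c" "a \<noteq> b" "a \<noteq> c" "b \<noteq> c" "c \<noteq> xor a b"
    using assms(1) by (simp_all add: plane_points_def)
  have ne: "vec_of_nat p \<noteq> vec_of_nat q" if "p < 128" "q < 128" "p \<noteq> q" for p q
    using vec_of_nat_inj that by blast
  have "vec_of_nat a \<noteq> 0"
    using ne[of 0 a] small dist by (simp add: vec_of_nat_0)
  moreover have "vec_of_nat b \<notin> {0, vec_of_nat a}"
    using ne[of 0 b] ne[of a b] small dist by (simp add: vec_of_nat_0)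
  moreover have "vec_of_nat c \<notin> {0, vec_of_nat b, vec_of_nat a, vec_of_nat b + vec_of_nat a}"
    using ne[of 0 c] ne[of a c] ne[of b c] ne[of c "xor a b"] small dist
    by (simp add: vec_of_nat_0 vec_of_nat_xor add.commute)
  ultimately have "vec.independent {vec_of_nat c, vec_of_nat b, vec_of_nat a}"
    by (rule bit_independent_three)
  moreover have "card {vec_of_nat c, vec_of_nat b, vec_of_nat a} = 3"
    using ne[of a b] ne[of a c] ne[of b c] small dist by simp
  moreover have "{vec_of_nat c, vec_of_nat b, vec_of_nat a} = {vec_of_nat a, vec_of_nat b, vec_of_nat c}"
    by blast
  ultimately show ?thesis using vec.dim_span_eq_card_independent by metis
qed


section \<open>The 396 planes\<close>

text \<open>The planes are listed by their points: entry j is the list [0, a, b, c, ...] of the plane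
  with basis a, b, c.  The table is stored as a balanced decision tree on the index, so that the
  simplifier finds an entry after about nine comparisons.\<close>

definition plane_table :: "nat \<Rightarrow> nat list" where
  "plane_table j =
    (if j < 198 then (if j < 99 then (if j < 49 then (if j < 24 then (if j < 12 then (if j < 6
    then (if j < 3 then (if j < 1 then [0,1,2,4,3,5,6,7] else (if j < 2 then
    [0,9,34,28,43,21,62,55] else [0,17,66,52,83,37,118,103])) else (if j < 4 then
    [0,25,98,44,123,53,78,87] else (if j < 5 then [0,33,26,100,59,69,126,95] else
    [0,41,58,124,19,85,70,111]))) else (if j < 9 then (if j < 7 then [0,49,90,84,107,101,14,63]
    else (if j < 8 then [0,57,122,76,67,117,54,15] else [0,65,50,92,115,29,110,47])) else (if j
    < 10 then [0,73,18,68,91,13,86,31] else (if j < 11 then [0,81,114,108,35,61,30,79] else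
    [0,89,82,116,11,45,38,127])))) else (if j < 18 then (if j < 15 then (if j < 13 then
    [0,97,42,60,75,93,22,119] else (if j < 14 then [0,105,10,36,99,77,46,71] else
    [0,113,106,12,27,125,102,23])) else (if j < 16 then [0,121,74,20,51,109,94,39] else (if j <
    17 then [0,9,18,36,27,45,54,63] else [0,1,50,60,51,61,14,15]))) else (if j < 21 then (if j <
    19 then [0,25,82,20,75,13,70,95] else (if j < 20 then [0,17,114,12,99,29,126,111] else
    [0,41,10,68,35,109,78,103])) else (if j < 22 then [0,33,42,92,11,125,118,87] else (if j < 23
    then [0,57,74,116,115,77,62,7] else [0,49,106,108,91,93,6,55]))))) else (if j < 36 then (if
    j < 30 then (if j < 27 then (if j < 25 then [0,73,34,124,107,53,94,23] else (if j < 26 then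
    [0,65,2,100,67,37,102,39] else [0,89,98,76,59,21,46,119])) else (if j < 28 then
    [0,81,66,84,19,5,22,71] else (if j < 29 then [0,105,58,28,83,117,38,79] else
    [0,97,26,4,123,101,30,127]))) else (if j < 33 then (if j < 31 then [0,121,122,44,3,85,86,47]
    else (if j < 32 then [0,113,90,52,43,69,110,31] else [0,17,34,68,51,85,102,119])) else (if j
    < 34 then [0,25,2,92,27,69,94,71] else (if j < 35 then [0,1,98,116,99,117,22,23] else
    [0,9,66,108,75,101,46,39])))) else (if j < 42 then (if j < 39 then (if j < 37 then
    [0,49,58,36,11,21,30,47] else (if j < 38 then [0,57,26,60,35,5,38,31] else
    [0,33,122,20,91,53,110,79])) else (if j < 40 then [0,41,90,12,115,37,86,127] else (if j < 41
    then [0,81,18,28,67,77,14,95] else [0,89,50,4,107,93,54,111]))) else (if j < 45 then (if j <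
    43 then [0,65,82,44,19,109,126,63] else (if j < 44 then [0,73,114,52,59,125,70,15] else
    [0,113,10,124,123,13,118,7])) else (if j < 47 then (if j < 46 then
    [0,121,42,100,83,29,78,55] else [0,97,74,76,43,45,6,103]) else (if j < 48 then
    [0,105,106,84,3,61,62,87] else [0,25,50,100,43,125,86,79])))))) else (if j < 74 then (if j <
    61 then (if j < 55 then (if j < 52 then (if j < 50 then [0,17,18,124,3,109,110,127] else (if
    j < 51 then [0,9,114,84,123,93,38,47] else [0,1,82,76,83,77,30,31])) else (if j < 53 then
    [0,57,42,4,19,61,46,23] else (if j < 54 then [0,49,10,28,59,45,22,39] else
    [0,41,106,52,67,29,94,119]))) else (if j < 58 then (if j < 56 then
    [0,33,74,44,107,13,102,71] else (if j < 57 then [0,89,2,60,91,101,62,103] else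
    [0,81,34,36,115,117,6,87])) else (if j < 59 then [0,73,66,12,11,69,78,7] else (if j < 60
    then [0,65,98,20,35,85,118,55] else [0,121,26,92,99,37,70,63])))) else (if j < 67 then (if j
    < 64 then (if j < 62 then [0,113,58,68,75,53,126,15] else (if j < 63 then
    [0,105,90,108,51,5,54,95] else [0,97,122,116,27,21,14,111])) else (if j < 65 then
    [0,33,66,28,99,61,94,127] else (if j < 66 then [0,41,98,4,75,45,102,79] else
    [0,49,2,44,51,29,46,31]))) else (if j < 70 then (if j < 68 then [0,57,34,52,27,13,22,47]
    else (if j < 69 then [0,1,90,124,91,125,38,39] else [0,9,122,100,115,109,30,23])) else (if j
    < 72 then (if j < 71 then [0,17,26,76,11,93,86,71] else [0,25,58,84,35,77,110,119]) else (if
    j < 73 then [0,97,114,68,19,37,54,87] else [0,105,82,92,59,53,14,103]))))) else (if j < 86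
    then (if j < 80 then (if j < 77 then (if j < 75 then [0,113,50,116,67,5,70,55] else (if j <
    76 then [0,121,18,108,107,21,126,7] else [0,65,106,36,43,101,78,15])) else (if j < 78 then
    [0,73,74,60,3,117,118,63] else (if j < 79 then [0,81,42,20,123,69,62,111] else
    [0,89,10,12,83,85,6,95]))) else (if j < 83 then (if j < 81 then [0,41,82,60,123,21,110,71]
    else (if j < 82 then [0,33,114,36,83,5,86,119] else [0,57,18,12,43,53,30,39])) else (if j <
    84 then [0,49,50,20,3,37,38,23] else (if j < 85 then [0,9,74,92,67,85,22,31] else
    [0,1,106,68,107,69,46,47])))) else (if j < 92 then (if j < 89 then (if j < 87 then
    [0,25,10,108,19,117,102,127] else (if j < 88 then [0,17,42,116,59,101,94,79] else
    [0,105,98,100,11,13,6,111])) else (if j < 90 then [0,97,66,124,35,29,62,95] else (if j < 91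
    then [0,121,34,84,91,45,118,15] else [0,113,2,76,115,61,78,63]))) else (if j < 95 then (if j
    < 93 then [0,73,122,4,51,77,126,55] else (if j < 94 then [0,65,90,28,27,93,70,7] else
    [0,89,58,52,99,109,14,87])) else (if j < 97 then (if j < 96 then [0,81,26,44,75,125,54,103]
    else [0,49,98,92,83,109,62,15]) else (if j < 98 then [0,57,66,68,123,125,6,63] else
    [0,33,34,108,3,77,78,111]))))))) else (if j < 148 then (if j < 123 then (if j < 111 then (if
    j < 105 then (if j < 102 then (if j < 100 then [0,41,2,116,43,93,118,95] else (if j < 101
    then [0,17,122,60,107,45,70,87] else [0,25,90,36,67,61,126,103])) else (if j < 103 then
    [0,1,58,12,59,13,54,55] else (if j < 104 then [0,9,26,20,19,29,14,7] else
    [0,113,82,4,35,117,86,39]))) else (if j < 108 then (if j < 106 then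
    [0,121,114,28,11,101,110,23] else (if j < 107 then [0,97,18,52,115,85,38,71] else
    [0,105,50,44,91,69,30,119])) else (if j < 109 then [0,81,74,100,27,53,46,127] else (if j <
    110 then [0,89,106,124,51,37,22,79] else [0,65,10,84,75,21,94,31])))) else (if j < 117 then
    (if j < 114 then (if j < 112 then [0,73,42,76,99,5,102,47] else (if j < 113 then
    [0,57,114,124,75,69,14,55] else [0,49,82,100,99,85,54,7])) else (if j < 115 then
    [0,41,50,76,27,101,126,87] else (if j < 116 then [0,33,18,84,51,117,70,103] else
    [0,25,106,28,115,5,118,111]))) else (if j < 120 then (if j < 118 then
    [0,17,74,4,91,21,78,95] else (if j < 119 then [0,9,42,44,35,37,6,15] else
    [0,1,10,52,11,53,62,63])) else (if j < 121 then [0,121,66,36,59,93,102,31] else (if j < 122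
    then [0,113,98,60,19,77,94,47] else [0,105,2,20,107,125,22,127]))))) else (if j < 135 then
    (if j < 129 then (if j < 126 then (if j < 124 then [0,97,34,12,67,109,46,79] else (if j <
    125 then [0,89,90,68,3,29,30,71] else [0,81,122,92,43,13,38,119])) else (if j < 127 then
    [0,73,26,116,83,61,110,39] else (if j < 128 then [0,65,58,108,123,45,86,23] else
    [0,65,26,52,91,117,46,111]))) else (if j < 132 then (if j < 130 then
    [0,73,58,44,115,101,22,95] else (if j < 131 then [0,81,90,4,11,85,94,15] else
    [0,89,122,28,35,69,102,63])) else (if j < 133 then [0,97,2,84,99,53,86,55] else (if j < 134
    then [0,105,34,76,75,37,110,7] else [0,113,66,100,51,21,38,87])))) else (if j < 141 then (if
    j < 138 then (if j < 136 then [0,121,98,124,27,5,30,103] else (if j < 137 then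
    [0,1,42,108,43,109,70,71] else [0,9,10,116,3,125,126,119])) else (if j < 139 then
    [0,17,106,92,123,77,54,39] else (if j < 140 then [0,25,74,68,83,93,14,23] else
    [0,33,50,12,19,45,62,31]))) else (if j < 144 then (if j < 142 then [0,41,18,20,59,61,6,47]
    else (if j < 143 then [0,49,114,60,67,13,78,127] else [0,57,82,36,107,29,118,79])) else (if
    j < 146 then (if j < 145 then [0,73,10,20,67,93,30,87] else [0,65,42,12,107,77,38,103]) else
    (if j < 147 then [0,89,74,36,19,125,110,55] else [0,81,106,60,59,109,86,7])))))) else (if j
    < 173 then (if j < 160 then (if j < 154 then (if j < 151 then (if j < 149 then
    [0,105,18,116,123,29,102,15] else (if j < 150 then [0,97,50,108,83,13,94,63] else
    [0,121,82,68,43,61,22,111])) else (if j < 152 then [0,113,114,92,3,45,46,95] else (if j <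
    153 then [0,9,58,76,51,69,118,127] else [0,1,26,84,27,85,78,79]))) else (if j < 157 then (if
    j < 155 then [0,25,122,124,99,101,6,31] else (if j < 156 then [0,17,90,100,75,117,62,47]
    else [0,41,34,44,11,5,14,39])) else (if j < 158 then [0,33,2,52,35,21,54,23] else (if j <
    159 then [0,57,98,28,91,37,126,71] else [0,49,66,4,115,53,70,119])))) else (if j < 166 then
    (if j < 163 then (if j < 161 then [0,81,58,116,107,37,78,31] else (if j < 162 then
    [0,89,26,108,67,53,118,47] else [0,65,122,68,59,5,62,127])) else (if j < 164 then
    [0,73,90,92,19,21,6,79] else (if j < 165 then [0,113,34,20,83,101,54,71] else
    [0,121,2,12,123,117,14,119]))) else (if j < 169 then (if j < 167 then
    [0,97,98,36,3,69,70,39] else (if j < 168 then [0,105,66,60,43,85,126,23] else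
    [0,17,10,44,27,61,38,55])) else (if j < 171 then (if j < 170 then [0,25,42,52,51,45,30,7]
    else [0,1,74,28,75,29,86,87]) else (if j < 172 then [0,9,106,4,99,13,110,103] else
    [0,49,18,76,35,125,94,111]))))) else (if j < 185 then (if j < 179 then (if j < 176 then (if
    j < 174 then [0,57,50,84,11,109,102,95] else (if j < 175 then [0,33,82,124,115,93,46,15]
    else [0,41,114,100,91,77,22,63])) else (if j < 177 then [0,89,42,84,115,13,126,39] else (if
    j < 178 then [0,81,10,76,91,29,70,23] else [0,73,106,100,35,45,14,71]))) else (if j < 182
    then (if j < 180 then [0,65,74,124,11,61,54,119] else (if j < 181 then
    [0,121,50,52,75,77,6,127] else [0,113,18,44,99,93,62,79])) else (if j < 183 then
    [0,105,114,4,27,109,118,31] else (if j < 184 then [0,97,82,28,51,125,78,47] else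
    [0,25,26,12,3,21,22,15])))) else (if j < 191 then (if j < 188 then (if j < 186 then
    [0,17,58,20,43,5,46,63] else (if j < 187 then [0,9,90,60,83,53,102,111] else
    [0,1,122,36,123,37,94,95])) else (if j < 189 then [0,57,2,108,59,85,110,87] else (if j < 190
    then [0,49,34,116,19,69,86,103] else [0,41,66,92,107,117,30,55]))) else (if j < 194 then (if
    j < 192 then [0,33,98,68,67,101,38,7] else (if j < 193 then [0,97,90,44,59,77,118,23] else
    [0,105,122,52,19,93,78,39])) else (if j < 196 then (if j < 195 then
    [0,113,26,28,107,109,6,119] else [0,121,58,4,67,125,62,71]) else (if j < 197 then
    [0,65,66,76,3,13,14,79] else [0,73,98,84,43,29,54,127])))))))) else (if j < 297 then (if j <
    247 then (if j < 222 then (if j < 210 then (if j < 204 then (if j < 201 then (if j < 199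
    then [0,81,2,124,83,45,126,47] else (if j < 200 then [0,89,34,100,123,61,70,31] else
    [0,33,106,116,75,85,30,63])) else (if j < 202 then [0,41,74,108,99,69,38,15] else (if j <
    203 then [0,49,42,68,27,117,110,95] else [0,57,10,92,51,101,86,111]))) else (if j < 207 then
    (if j < 205 then [0,1,114,20,115,21,102,103] else (if j < 206 then [0,9,82,12,91,5,94,87]
    else [0,17,50,36,35,53,22,7])) else (if j < 208 then [0,25,18,60,11,37,46,55] else (if j <
    209 then [0,105,74,12,35,101,70,47] else [0,97,106,20,11,117,126,31])))) else (if j < 216
    then (if j < 213 then (if j < 211 then [0,121,10,60,115,69,54,79] else (if j < 212 then
    [0,113,42,36,91,85,14,127] else [0,73,82,108,27,37,62,119])) else (if j < 214 then
    [0,65,114,116,51,53,6,71] else (if j < 215 then [0,89,18,92,75,5,78,23] else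
    [0,81,50,68,99,21,118,39]))) else (if j < 219 then (if j < 217 then
    [0,41,122,84,83,125,46,7] else (if j < 218 then [0,33,90,76,123,109,22,55] else
    [0,57,58,100,3,93,94,103])) else (if j < 220 then [0,49,26,124,43,77,102,87] else (if j <
    221 then [0,9,98,52,107,61,86,95] else [0,1,66,44,67,45,110,111]))))) else (if j < 234 then
    (if j < 228 then (if j < 225 then (if j < 223 then [0,25,34,4,59,29,38,63] else (if j < 224
    then [0,17,2,28,19,13,30,15] else [0,113,122,108,11,29,22,103])) else (if j < 226 then
    [0,121,90,116,35,13,46,87] else (if j < 227 then [0,97,58,92,91,61,102,7] else
    [0,105,26,68,115,45,94,55]))) else (if j < 231 then (if j < 229 then
    [0,81,98,12,51,93,110,63] else (if j < 230 then [0,89,66,20,27,77,86,15] else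
    [0,65,34,60,99,125,30,95])) else (if j < 232 then [0,73,2,36,75,109,38,111] else (if j < 233
    then [0,49,74,52,123,5,126,79] else [0,57,106,44,83,21,70,127])))) else (if j < 240 then (if
    j < 237 then (if j < 235 then [0,33,10,4,43,37,14,47] else (if j < 236 then
    [0,41,42,28,3,53,54,31] else [0,17,82,84,67,69,6,23])) else (if j < 238 then
    [0,25,114,76,107,85,62,39] else (if j < 239 then [0,1,18,100,19,101,118,119] else
    [0,9,50,124,59,117,78,71]))) else (if j < 243 then (if j < 241 then
    [0,121,106,76,19,53,38,95] else (if j < 242 then [0,113,74,84,59,37,30,111] else
    [0,105,42,124,67,21,86,63])) else (if j < 245 then (if j < 244 then
    [0,97,10,100,107,5,110,15] else [0,89,114,44,43,117,94,7]) else (if j < 246 then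
    [0,81,82,52,3,101,102,55] else [0,73,50,28,123,85,46,103])))))) else (if j < 272 then (if j
    < 259 then (if j < 253 then (if j < 250 then (if j < 248 then [0,65,18,4,83,69,22,87] else
    (if j < 249 then [0,57,90,20,99,45,78,119] else [0,49,122,12,75,61,118,71])) else (if j <
    251 then [0,41,26,36,51,13,62,23] else (if j < 252 then [0,33,58,60,27,29,6,39] else
    [0,25,66,116,91,109,54,47]))) else (if j < 256 then (if j < 254 then
    [0,17,98,108,115,125,14,31] else (if j < 255 then [0,9,2,68,11,77,70,79] else
    [0,1,34,92,35,93,126,127])) else (if j < 257 then [0,1,32,80,33,81,112,113] else (if j < 258
    then [0,9,32,80,41,89,112,121] else [0,17,32,80,49,65,112,97])))) else (if j < 265 then (if
    j < 262 then (if j < 260 then [0,25,32,80,57,73,112,105] else (if j < 261 then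
    [0,1,48,88,49,89,104,105] else [0,9,48,88,57,81,104,97])) else (if j < 263 then
    [0,17,48,88,33,73,104,121] else (if j < 264 then [0,25,48,88,41,65,104,113] else
    [0,1,40,72,41,73,96,97]))) else (if j < 268 then (if j < 266 then [0,9,40,72,33,65,96,105]
    else (if j < 267 then [0,17,40,72,57,89,96,113] else [0,25,40,72,49,81,96,121])) else (if j
    < 270 then (if j < 269 then [0,1,56,64,57,65,120,121] else [0,9,56,64,49,73,120,113]) else
    (if j < 271 then [0,17,56,64,41,81,120,105] else [0,25,56,64,33,89,120,97]))))) else (if j <
    284 then (if j < 278 then (if j < 275 then (if j < 273 then [0,1,8,16,9,17,24,25] else (if j
    < 274 then [0,33,8,16,41,49,24,57] else [0,65,8,16,73,81,24,89])) else (if j < 276 then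
    [0,97,8,16,105,113,24,121] else (if j < 277 then [0,2,56,72,58,74,112,114] else
    [0,10,56,72,50,66,112,122]))) else (if j < 281 then (if j < 279 then
    [0,18,56,72,42,90,112,98] else (if j < 280 then [0,26,56,72,34,82,112,106] else
    [0,2,40,80,42,82,120,122])) else (if j < 282 then [0,10,40,80,34,90,120,114] else (if j <
    283 then [0,18,40,80,58,66,120,106] else [0,26,40,80,50,74,120,98])))) else (if j < 290 then
    (if j < 287 then (if j < 285 then [0,2,16,32,18,34,48,50] else (if j < 286 then
    [0,10,16,32,26,42,48,58] else [0,66,16,32,82,98,48,114])) else (if j < 288 then
    [0,74,16,32,90,106,48,122] else (if j < 289 then [0,2,24,64,26,66,88,90] else
    [0,10,24,64,18,74,88,82]))) else (if j < 293 then (if j < 291 then [0,34,24,64,58,98,88,122]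
    else (if j < 292 then [0,42,24,64,50,106,88,114] else [0,2,8,96,10,98,104,106])) else (if j
    < 295 then (if j < 294 then [0,18,8,96,26,114,104,122] else [0,34,8,96,42,66,104,74]) else
    (if j < 296 then [0,50,8,96,58,82,104,90] else [0,3,40,88,43,91,112,115]))))))) else (if j <
    346 then (if j < 321 then (if j < 309 then (if j < 303 then (if j < 300 then (if j < 298
    then [0,11,40,88,35,83,112,123] else (if j < 299 then [0,19,40,88,59,75,112,99] else
    [0,27,40,88,51,67,112,107])) else (if j < 301 then [0,3,24,72,27,75,80,83] else (if j < 302
    then [0,11,24,72,19,67,80,91] else [0,35,24,72,59,107,80,115]))) else (if j < 306 then (if j
    < 304 then [0,43,24,72,51,99,80,123] else (if j < 305 then [0,3,8,48,11,51,56,59] else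
    [0,19,8,48,27,35,56,43])) else (if j < 307 then [0,67,8,48,75,115,56,123] else (if j < 308
    then [0,83,8,48,91,99,56,107] else [0,3,32,64,35,67,96,99])))) else (if j < 315 then (if j <
    312 then (if j < 310 then [0,11,32,64,43,75,96,107] else (if j < 311 then
    [0,19,32,64,51,83,96,115] else [0,27,32,64,59,91,96,123])) else (if j < 313 then
    [0,3,16,104,19,107,120,123] else (if j < 314 then [0,11,16,104,27,99,120,115] else
    [0,35,16,104,51,75,120,91]))) else (if j < 318 then (if j < 316 then
    [0,43,16,104,59,67,120,83] else (if j < 317 then [0,4,48,64,52,68,112,116] else
    [0,12,48,64,60,76,112,124])) else (if j < 319 then [0,20,48,64,36,84,112,100] else (if j <
    320 then [0,28,48,64,44,92,112,108] else [0,4,32,72,36,76,104,108]))))) else (if j < 333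
    then (if j < 327 then (if j < 324 then (if j < 322 then [0,12,32,72,44,68,104,100] else (if
    j < 323 then [0,20,32,72,52,92,104,124] else [0,28,32,72,60,84,104,116])) else (if j < 325
    then [0,4,8,80,12,84,88,92] else (if j < 326 then [0,20,8,80,28,68,88,76] else
    [0,36,8,80,44,116,88,124]))) else (if j < 330 then (if j < 328 then
    [0,52,8,80,60,100,88,108] else (if j < 329 then [0,4,24,96,28,100,120,124] else
    [0,12,24,96,20,108,120,116])) else (if j < 331 then [0,36,24,96,60,68,120,92] else (if j <
    332 then [0,44,24,96,52,76,120,84] else [0,4,16,40,20,44,56,60])))) else (if j < 339 then
    (if j < 336 then (if j < 334 then [0,12,16,40,28,36,56,52] else (if j < 335 then
    [0,68,16,40,84,108,56,124] else [0,76,16,40,92,100,56,116])) else (if j < 337 then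
    [0,5,24,104,29,109,112,117] else (if j < 338 then [0,13,24,104,21,101,112,125] else
    [0,37,24,104,61,77,112,85]))) else (if j < 342 then (if j < 340 then
    [0,45,24,104,53,69,112,93] else (if j < 341 then [0,5,16,64,21,69,80,85] else
    [0,13,16,64,29,77,80,93])) else (if j < 344 then (if j < 343 then [0,37,16,64,53,101,80,117]
    else [0,45,16,64,61,109,80,125]) else (if j < 345 then [0,5,8,32,13,37,40,45] else
    [0,21,8,32,29,53,40,61])))))) else (if j < 371 then (if j < 358 then (if j < 352 then (if j
    < 349 then (if j < 347 then [0,69,8,32,77,101,40,109] else (if j < 348 then
    [0,85,8,32,93,117,40,125] else [0,5,56,88,61,93,96,101])) else (if j < 350 then
    [0,13,56,88,53,85,96,109] else (if j < 351 then [0,21,56,88,45,77,96,117] else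
    [0,29,56,88,37,69,96,125]))) else (if j < 355 then (if j < 353 then
    [0,5,48,72,53,77,120,125] else (if j < 354 then [0,13,48,72,61,69,120,117] else
    [0,21,48,72,37,93,120,109])) else (if j < 356 then [0,29,48,72,45,85,120,101] else (if j <
    357 then [0,6,56,80,62,86,104,110] else [0,14,56,80,54,94,104,102])))) else (if j < 364 then
    (if j < 361 then (if j < 359 then [0,22,56,80,46,70,104,126] else (if j < 360 then
    [0,30,56,80,38,78,104,118] else [0,6,8,64,14,70,72,78])) else (if j < 362 then
    [0,22,8,64,30,86,72,94] else (if j < 363 then [0,38,8,64,46,102,72,110] else
    [0,54,8,64,62,118,72,126]))) else (if j < 367 then (if j < 365 then
    [0,6,32,88,38,94,120,126] else (if j < 366 then [0,14,32,88,46,86,120,118] else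
    [0,22,32,88,54,78,120,110])) else (if j < 369 then (if j < 368 then
    [0,30,32,88,62,70,120,102] else [0,6,16,96,22,102,112,118]) else (if j < 370 then
    [0,14,16,96,30,110,112,126] else [0,38,16,96,54,70,112,86]))))) else (if j < 383 then (if j
    < 377 then (if j < 374 then (if j < 372 then [0,46,16,96,62,78,112,94] else (if j < 373 then
    [0,6,24,40,30,46,48,54] else [0,14,24,40,22,38,48,62])) else (if j < 375 then
    [0,70,24,40,94,110,48,118] else (if j < 376 then [0,78,24,40,86,102,48,126] else
    [0,7,8,112,15,119,120,127]))) else (if j < 380 then (if j < 378 then
    [0,23,8,112,31,103,120,111] else (if j < 379 then [0,39,8,112,47,87,120,95] else
    [0,55,8,112,63,71,120,79])) else (if j < 381 then [0,7,16,72,23,79,88,95] else (if j < 382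
    then [0,15,16,72,31,71,88,87] else [0,39,16,72,55,111,88,127])))) else (if j < 389 then (if
    j < 386 then (if j < 384 then [0,47,16,72,63,103,88,119] else (if j < 385 then
    [0,7,24,32,31,39,56,63] else [0,15,24,32,23,47,56,55])) else (if j < 387 then
    [0,71,24,32,95,103,56,127] else (if j < 388 then [0,79,24,32,87,111,56,119] else
    [0,7,40,64,47,71,104,111]))) else (if j < 392 then (if j < 390 then
    [0,15,40,64,39,79,104,103] else (if j < 391 then [0,23,40,64,63,87,104,127] else
    [0,31,40,64,55,95,104,119])) else (if j < 394 then (if j < 393 then [0,7,48,80,55,87,96,103]
    else [0,15,48,80,63,95,96,111]) else (if j < 395 then [0,23,48,80,39,71,96,119] else
    [0,31,48,80,47,79,96,127])))))))))"

definition well_formed :: "nat list \<Rightarrow> bool" where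
  "well_formed ps \<longleftrightarrow> ps = plane_points (ps ! 1) (ps ! 2) (ps ! 3) \<and> distinct ps \<and>
     (\<forall>p\<in>set ps. p < 128)"

text \<open>The index range is written as
  0 # 1 # [2..<396] so that the simplifier enumerates it as numerals rather than successor terms;
  for the same reason, the value 3 of an xor is rewritten back to a numeral.\<close>

lemma plane_table_well_formed:
  assumes "j < 396"
  shows "well_formed (plane_table j)"
proof -
  have "list_all (\<lambda>j. well_formed (plane_table j)) (0 # 1 # [2..<396])"
    by (simp add: well_formed_def plane_table_def plane_points_def numeral_3_eq_3[symmetric])
  moreover have "j \<in> set (0 # 1 # [2..<396])" using assms by (auto simp del: upt_rec_numeral)
  ultimately show ?thesis unfolding list_all_iff by blast
qed

definition plane :: "nat \<Rightarrow> (bit ^ 7) set" where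
  "plane j = (let ps = plane_table j in
     vec.span {vec_of_nat (ps ! 1), vec_of_nat (ps ! 2), vec_of_nat (ps ! 3)})"

lemma plane_subspace: "j < 396 \<Longrightarrow> vec.subspace (plane j) \<and> vec.dim (plane j) = 3"
  using plane_table_well_formed[of j] plane_dim
  by (auto simp: plane_def Let_def well_formed_def vec.subspace_span)

lemma plane_contains:
  "j < 396 \<Longrightarrow> m \<in> set (plane_table j) \<Longrightarrow> vec_of_nat m \<in> plane j"
  using plane_table_well_formed[of j] plane_points_in_span
  unfolding plane_def Let_def well_formed_def by metis


section \<open>Every pair of points lies in a common plane\<close>

definition in_common_plane :: "nat \<Rightarrow> nat \<Rightarrow> nat \<Rightarrow> bool" where
  "in_common_plane m n j \<longleftrightarrow> j < 396 \<and> m \<in> set (plane_table j) \<and> n \<in> set (plane_table j)"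

text \<open>The certificate: for each 0 < m < 127, the indices of planes containing m and n, for
  n = m + 1, ..., 127.  Each row is checked by first splitting it into one statement per n and
  then looking up the planes.\<close>

named_theorems witness_rows

lemma [witness_rows]: "list_all2 (in_common_plane 1) [Suc 1..<128]
    [0, 0, 0, 0, 0, 0, 272, 272, 119, 119, 102, 102, 17, 17, 272, 272, 238, 238, 204, 204, 34,
    34, 272, 272, 153, 153, 170, 170, 51, 51, 256, 256, 255, 255, 187, 187, 68, 68, 264, 264,
    136, 136, 221, 221, 85, 85, 260, 260, 17, 17, 119, 119, 102, 102, 268, 268, 102, 102, 17,
    17, 119, 119, 268, 268, 221, 221, 85, 85, 136, 136, 264, 264, 170, 170, 51, 51, 153, 153,
    256, 256, 51, 51, 153, 153, 170, 170, 260, 260, 68, 68, 255, 255, 187, 187, 264, 264, 34,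
    34, 238, 238, 204, 204, 260, 260, 85, 85, 136, 136, 221, 221, 256, 256, 204, 204, 34, 34,
    238, 238, 268, 268, 187, 187, 68, 68, 255, 255]"
  by (simp add: upt_rec) (simp add: in_common_plane_def plane_table_def)

lemma [witness_rows]: "list_all2 (in_common_plane 2) [Suc 2..<128]
    [0, 0, 0, 0, 0, 292, 254, 292, 254, 165, 223, 165, 223, 284, 223, 284, 223, 122, 157, 122,
    157, 288, 33, 288, 33, 223, 66, 223, 66, 284, 157, 284, 157, 231, 25, 231, 25, 280, 99, 280,
    99, 66, 198, 66, 198, 284, 66, 284, 66, 157, 132, 157, 132, 276, 188, 276, 188, 56, 91, 56,
    91, 288, 25, 288, 25, 254, 33, 254, 33, 276, 231, 276, 231, 91, 254, 91, 254, 280, 198, 280,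
    198, 132, 188, 132, 188, 288, 56, 288, 56, 33, 99, 33, 99, 292, 132, 292, 132, 25, 56, 25,
    56, 292, 122, 292, 122, 188, 231, 188, 231, 276, 91, 276, 91, 99, 165, 99, 165, 280, 165,
    280, 165, 198, 122, 198, 122]"
  by (simp add: upt_rec) (simp add: in_common_plane_def plane_table_def)

lemma [witness_rows]: "list_all2 (in_common_plane 3) [Suc 3..<128]
    [0, 0, 0, 0, 304, 137, 137, 304, 184, 196, 196, 184, 312, 49, 49, 312, 83, 184, 184, 83,
    300, 184, 184, 300, 235, 124, 124, 235, 308, 98, 98, 308, 166, 83, 83, 166, 296, 235, 235,
    296, 30, 151, 151, 30, 304, 83, 83, 304, 245, 235, 235, 245, 304, 218, 218, 304, 77, 47, 47,
    77, 308, 196, 196, 308, 124, 166, 166, 124, 300, 77, 77, 300, 196, 98, 98, 196, 300, 245,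
    245, 300, 47, 30, 30, 47, 296, 124, 124, 296, 151, 218, 218, 151, 308, 166, 166, 308, 218,
    245, 245, 218, 312, 47, 47, 312, 98, 49, 49, 98, 296, 151, 151, 296, 137, 77, 77, 137, 312,
    30, 30, 312, 49, 137, 137, 49]"
  by (simp add: upt_rec) (simp add: in_common_plane_def plane_table_def)

lemma [witness_rows]: "list_all2 (in_common_plane 4) [Suc 4..<128]
    [0, 0, 0, 324, 171, 234, 130, 324, 171, 234, 130, 332, 117, 247, 52, 332, 117, 247, 52, 328,
    222, 29, 182, 328, 222, 29, 182, 320, 234, 222, 104, 320, 234, 222, 104, 332, 65, 52, 234,
    332, 65, 52, 234, 316, 159, 41, 92, 316, 159, 41, 92, 332, 52, 195, 222, 332, 52, 195, 222,
    316, 247, 159, 195, 316, 247, 159, 195, 320, 92, 117, 65, 320, 92, 117, 65, 324, 130, 104,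
    247, 324, 130, 104, 247, 324, 41, 130, 117, 324, 41, 130, 117, 328, 29, 65, 171, 328, 29,
    65, 171, 320, 182, 171, 41, 320, 182, 171, 41, 316, 104, 182, 159, 316, 104, 182, 159, 328,
    195, 92, 29, 328, 195, 92, 29]"
  by (simp add: upt_rec) (simp add: in_common_plane_def plane_table_def)

lemma [witness_rows]: "list_all2 (in_common_plane 5) [Suc 5..<128]
    [0, 0, 344, 205, 243, 156, 205, 344, 156, 243, 340, 185, 214, 27, 185, 340, 27, 214, 336,
    116, 37, 135, 116, 336, 135, 37, 344, 81, 156, 37, 81, 344, 37, 156, 344, 156, 111, 185,
    156, 344, 185, 111, 352, 232, 74, 62, 232, 352, 62, 74, 348, 37, 185, 162, 37, 348, 162,
    185, 340, 162, 27, 74, 162, 340, 74, 27, 352, 111, 232, 214, 111, 352, 214, 232, 340, 27,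
    205, 81, 27, 340, 81, 205, 348, 214, 62, 205, 214, 348, 205, 62, 348, 243, 135, 111, 243,
    348, 111, 135, 336, 62, 116, 243, 62, 336, 243, 116, 336, 74, 81, 116, 74, 336, 116, 81,
    352, 135, 162, 232, 135, 352, 232, 162]"
  by (simp add: upt_rec) (simp add: in_common_plane_def plane_table_def)

lemma [witness_rows]: "list_all2 (in_common_plane 6) [Suc 6..<128]
    [0, 360, 118, 79, 88, 79, 88, 360, 118, 368, 236, 141, 163, 141, 163, 368, 236, 372, 154,
    194, 251, 194, 251, 372, 154, 364, 251, 57, 118, 57, 118, 364, 251, 372, 141, 118, 46, 118,
    46, 372, 141, 372, 23, 180, 213, 180, 213, 372, 23, 356, 97, 251, 141, 251, 141, 356, 97,
    360, 213, 97, 236, 97, 236, 360, 213, 360, 163, 46, 180, 46, 180, 360, 163, 356, 57, 236,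
    79, 236, 79, 356, 57, 364, 79, 163, 23, 163, 23, 364, 79, 368, 46, 88, 154, 88, 154, 368,
    46, 356, 88, 23, 194, 23, 194, 356, 88, 368, 194, 213, 57, 213, 57, 368, 194, 364, 180, 154,
    97, 154, 97, 364, 180]"
  by (simp add: upt_rec) (simp add: in_common_plane_def plane_table_def)

lemma [witness_rows]: "list_all2 (in_common_plane 7) [Suc 7..<128]
    [376, 103, 44, 58, 58, 44, 103, 376, 380, 206, 75, 103, 103, 75, 206, 380, 384, 169, 103,
    93, 93, 103, 169, 384, 384, 191, 133, 206, 206, 133, 191, 384, 388, 216, 169, 244, 244, 169,
    216, 388, 392, 113, 206, 169, 169, 206, 113, 392, 384, 22, 226, 147, 147, 226, 22, 384, 388,
    93, 58, 191, 191, 58, 93, 388, 380, 58, 22, 133, 133, 22, 58, 380, 392, 147, 113, 216, 216,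
    113, 147, 392, 380, 244, 93, 226, 226, 93, 244, 380, 392, 226, 191, 113, 113, 191, 226, 392,
    388, 133, 147, 75, 75, 147, 133, 388, 376, 44, 244, 22, 22, 244, 44, 376, 376, 75, 216, 44,
    44, 216, 75, 376]"
  by (simp add: upt_rec) (simp add: in_common_plane_def plane_table_def)

lemma [witness_rows]: "list_all2 (in_common_plane 8) [Suc 8..<128]
    [272, 292, 304, 324, 344, 360, 376, 272, 272, 293, 305, 325, 345, 361, 377, 272, 272, 293,
    305, 325, 345, 361, 377, 344, 273, 294, 305, 326, 344, 362, 378, 344, 273, 294, 305, 326,
    344, 362, 378, 304, 273, 295, 304, 327, 345, 363, 379, 304, 273, 295, 304, 327, 345, 363,
    379, 360, 274, 294, 306, 325, 346, 360, 379, 360, 274, 294, 306, 325, 346, 360, 379, 324,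
    274, 295, 307, 324, 347, 361, 378, 324, 274, 295, 307, 324, 347, 361, 378, 292, 275, 292,
    307, 327, 346, 362, 377, 292, 275, 292, 307, 327, 346, 362, 377, 376, 275, 293, 306, 326,
    347, 363, 376, 376, 275, 293, 306, 326, 347, 363, 376]"
  by (simp add: upt_rec) (simp add: in_common_plane_def plane_table_def)

lemma [witness_rows]: "list_all2 (in_common_plane 9) [Suc 9..<128]
    [137, 254, 205, 171, 103, 118, 272, 272, 16, 103, 103, 1, 84, 69, 272, 272, 103, 16, 1, 103,
    69, 84, 257, 265, 1, 118, 16, 118, 50, 35, 265, 257, 118, 1, 118, 16, 35, 50, 261, 269, 239,
    152, 220, 186, 16, 1, 269, 261, 152, 239, 186, 220, 1, 16, 269, 265, 35, 84, 254, 152, 254,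
    239, 265, 269, 84, 35, 152, 254, 239, 254, 257, 261, 205, 186, 50, 84, 220, 205, 261, 257,
    186, 205, 84, 50, 205, 220, 265, 261, 220, 171, 69, 35, 186, 171, 261, 265, 171, 220, 35,
    69, 171, 186, 257, 269, 50, 69, 137, 239, 152, 137, 269, 257, 69, 50, 239, 137, 137, 152]"
  by (simp add: upt_rec) (simp add: in_common_plane_def plane_table_def)

lemma [witness_rows]: "list_all2 (in_common_plane 10) [Suc 10..<128]
    [119, 79, 44, 234, 243, 285, 168, 289, 86, 144, 110, 53, 177, 289, 86, 285, 168, 53, 177,
    144, 110, 285, 234, 281, 20, 13, 234, 168, 53, 281, 20, 285, 234, 168, 53, 13, 234, 285, 53,
    277, 203, 119, 119, 210, 168, 277, 203, 285, 53, 210, 168, 119, 119, 289, 110, 277, 144, 20,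
    210, 177, 13, 277, 144, 289, 110, 177, 13, 20, 210, 281, 177, 289, 79, 110, 79, 203, 144,
    289, 79, 281, 177, 203, 144, 110, 79, 292, 243, 292, 13, 243, 203, 86, 20, 292, 13, 292,
    243, 86, 20, 243, 203, 277, 44, 281, 210, 137, 86, 44, 137, 281, 210, 277, 44, 44, 137, 137,
    86]"
  by (simp add: upt_rec) (simp add: in_common_plane_def plane_table_def)

lemma [witness_rows]: "list_all2 (in_common_plane 11) [Suc 11..<128]
    [58, 88, 156, 130, 313, 70, 207, 301, 209, 36, 224, 105, 301, 207, 70, 313, 105, 224, 36,
    209, 309, 21, 156, 297, 36, 207, 11, 156, 297, 156, 21, 309, 156, 11, 207, 36, 304, 36, 173,
    304, 119, 119, 179, 207, 304, 173, 36, 304, 207, 179, 119, 119, 309, 179, 58, 301, 254, 58,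
    254, 70, 301, 58, 179, 309, 70, 254, 58, 254, 301, 130, 11, 297, 173, 130, 70, 21, 297, 11,
    130, 301, 21, 70, 130, 173, 309, 209, 88, 313, 88, 105, 173, 224, 313, 88, 209, 309, 224,
    173, 105, 88, 297, 224, 105, 313, 11, 209, 21, 179, 313, 105, 224, 297, 179, 21, 209, 11]"
  by (simp add: upt_rec) (simp add: in_common_plane_def plane_table_def)

lemma [witness_rows]: "list_all2 (in_common_plane 12) [Suc 12..<128]
    [102, 165, 184, 333, 19, 82, 140, 329, 184, 184, 14, 329, 184, 184, 14, 333, 19, 82, 140,
    321, 140, 123, 208, 333, 39, 145, 82, 333, 39, 145, 82, 321, 140, 123, 208, 317, 249, 140,
    228, 333, 82, 102, 102, 333, 82, 102, 102, 317, 249, 140, 228, 317, 145, 58, 123, 321, 58,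
    208, 249, 321, 58, 208, 249, 317, 145, 58, 123, 324, 228, 205, 79, 324, 79, 39, 205, 324,
    79, 39, 205, 324, 228, 205, 79, 329, 123, 228, 19, 321, 208, 14, 145, 321, 208, 14, 145,
    329, 123, 228, 19, 317, 14, 19, 39, 329, 165, 249, 165, 329, 165, 249, 165, 317, 14, 19, 39]"
  by (simp add: upt_rec) (simp add: in_common_plane_def plane_table_def)

lemma [witness_rows]: "list_all2 (in_common_plane 13) [Suc 13..<128]
    [196, 223, 341, 223, 9, 223, 18, 337, 67, 250, 337, 18, 250, 67, 223, 341, 223, 9, 344, 55,
    67, 225, 250, 344, 125, 176, 344, 250, 176, 125, 55, 344, 225, 67, 353, 142, 149, 250, 67,
    349, 102, 102, 349, 67, 102, 102, 142, 353, 250, 149, 341, 196, 196, 142, 9, 353, 18, 55,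
    353, 9, 55, 18, 196, 341, 142, 196, 341, 125, 18, 149, 176, 349, 9, 225, 349, 176, 225, 9,
    125, 341, 149, 18, 349, 149, 88, 171, 88, 337, 55, 171, 337, 88, 171, 55, 149, 349, 171, 88,
    337, 44, 142, 176, 225, 353, 44, 125, 353, 225, 125, 44, 44, 337, 176, 142]"
  by (simp add: upt_rec) (simp add: in_common_plane_def plane_table_def)

lemma [witness_rows]: "list_all2 (in_common_plane 14) [Suc 14..<128]
    [17, 369, 253, 40, 103, 103, 63, 373, 139, 373, 139, 103, 63, 40, 103, 369, 253, 365, 234,
    156, 178, 211, 234, 373, 156, 373, 156, 211, 234, 156, 178, 365, 234, 373, 6, 17, 17, 94,
    73, 357, 112, 357, 112, 94, 73, 17, 17, 373, 6, 360, 196, 196, 40, 139, 112, 360, 178, 360,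
    178, 139, 112, 196, 40, 360, 196, 357, 40, 73, 139, 6, 211, 365, 94, 365, 94, 6, 211, 73,
    139, 357, 40, 369, 63, 253, 94, 178, 6, 357, 73, 357, 73, 178, 6, 253, 94, 369, 63, 369,
    211, 112, 253, 63, 165, 365, 165, 365, 165, 63, 165, 112, 253, 369, 211]"
  by (simp add: upt_rec) (simp add: in_common_plane_def plane_table_def)

lemma [witness_rows]: "list_all2 (in_common_plane 15) [Suc 15..<128]
    [381, 223, 148, 223, 229, 184, 184, 385, 385, 184, 184, 229, 223, 148, 223, 381, 385, 174,
    90, 118, 76, 118, 201, 389, 389, 201, 118, 76, 118, 90, 174, 385, 393, 96, 17, 17, 43, 61,
    7, 385, 385, 7, 61, 43, 17, 17, 96, 393, 389, 76, 229, 7, 61, 201, 43, 381, 381, 43, 201,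
    61, 7, 229, 76, 389, 393, 130, 174, 96, 90, 130, 229, 381, 381, 229, 130, 90, 96, 174, 130,
    393, 393, 243, 96, 201, 243, 76, 148, 389, 389, 148, 76, 243, 201, 96, 243, 393, 376, 61,
    43, 174, 148, 7, 90, 376, 376, 90, 7, 148, 174, 43, 61, 376]"
  by (simp add: upt_rec) (simp add: in_common_plane_def plane_table_def)

lemma [witness_rows]: "list_all2 (in_common_plane 16) [Suc 16..<128]
    [272, 284, 312, 332, 340, 368, 380, 272, 272, 285, 313, 333, 341, 369, 381, 284, 273, 284,
    314, 333, 342, 370, 382, 332, 273, 285, 315, 332, 343, 371, 383, 284, 273, 284, 314, 333,
    342, 370, 382, 332, 273, 285, 315, 332, 343, 371, 383, 340, 274, 286, 315, 334, 340, 370,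
    381, 380, 274, 287, 314, 335, 341, 371, 380, 340, 274, 286, 315, 334, 340, 370, 381, 380,
    274, 287, 314, 335, 341, 371, 380, 368, 275, 286, 313, 335, 342, 368, 383, 312, 275, 287,
    312, 334, 343, 369, 382, 368, 275, 286, 313, 335, 342, 368, 383, 312, 275, 287, 312, 334,
    343, 369, 382]"
  by (simp add: upt_rec) (simp add: in_common_plane_def plane_table_def)

lemma [witness_rows]: "list_all2 (in_common_plane 17) [Suc 17..<128]
    [49, 223, 185, 117, 206, 236, 272, 272, 70, 168, 223, 19, 223, 253, 258, 262, 32, 206, 206,
    2, 168, 138, 266, 270, 87, 185, 168, 100, 185, 155, 262, 258, 206, 32, 2, 206, 138, 168,
    270, 266, 185, 87, 100, 168, 155, 185, 270, 258, 2, 236, 32, 236, 100, 70, 266, 262, 117,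
    155, 70, 138, 117, 87, 258, 270, 236, 2, 236, 32, 70, 100, 262, 266, 155, 117, 138, 70, 87,
    117, 266, 258, 253, 19, 155, 87, 32, 2, 262, 270, 138, 100, 253, 49, 49, 19, 258, 266, 19,
    253, 87, 155, 2, 32, 270, 262, 100, 138, 49, 253, 19, 49]"
  by (simp add: upt_rec) (simp add: in_common_plane_def plane_table_def)

lemma [witness_rows]: "list_all2 (in_common_plane 18) [Suc 18..<128]
    [238, 141, 75, 247, 214, 289, 207, 293, 16, 40, 148, 82, 9, 284, 115, 284, 172, 16, 207,
    106, 82, 282, 141, 278, 82, 181, 16, 207, 141, 284, 172, 284, 115, 106, 82, 16, 207, 278,
    82, 282, 141, 207, 141, 181, 16, 289, 247, 282, 40, 9, 247, 115, 106, 278, 9, 289, 214, 172,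
    40, 214, 181, 282, 40, 289, 247, 115, 106, 9, 247, 289, 214, 278, 9, 214, 181, 172, 40, 293,
    106, 278, 181, 238, 238, 148, 115, 293, 148, 282, 75, 75, 49, 49, 172, 278, 181, 293, 106,
    148, 115, 238, 238, 282, 75, 293, 148, 49, 172, 75, 49]"
  by (simp add: upt_rec) (simp add: in_common_plane_def plane_table_def)

lemma [witness_rows]: "list_all2 (in_common_plane 19) [Suc 19..<128]
    [103, 163, 27, 52, 301, 86, 103, 305, 223, 103, 223, 140, 310, 140, 189, 305, 146, 72, 240,
    193, 298, 5, 52, 305, 42, 140, 52, 121, 305, 189, 140, 310, 193, 240, 72, 146, 305, 52, 5,
    298, 121, 52, 140, 42, 310, 42, 27, 301, 72, 189, 5, 27, 301, 163, 146, 298, 240, 121, 193,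
    163, 301, 27, 42, 310, 27, 5, 189, 72, 298, 146, 163, 301, 163, 193, 121, 240, 310, 72, 121,
    298, 238, 238, 86, 189, 312, 193, 240, 312, 86, 42, 146, 5, 298, 121, 72, 310, 189, 86, 238,
    238, 312, 240, 193, 312, 5, 146, 42, 86]"
  by (simp add: upt_rec) (simp add: in_common_plane_def plane_table_def)

lemma [witness_rows]: "list_all2 (in_common_plane 20) [Suc 20..<128]
    [204, 122, 83, 329, 18, 103, 229, 325, 103, 144, 209, 322, 38, 164, 59, 318, 83, 83, 15,
    332, 141, 78, 185, 332, 248, 185, 141, 318, 83, 83, 15, 322, 38, 164, 59, 332, 248, 185,
    141, 332, 141, 78, 185, 318, 59, 229, 144, 325, 78, 18, 164, 322, 144, 15, 18, 325, 229,
    248, 38, 325, 78, 18, 164, 318, 59, 229, 144, 325, 229, 248, 38, 322, 144, 15, 18, 329, 209,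
    59, 248, 318, 164, 204, 204, 322, 122, 209, 122, 329, 15, 38, 78, 318, 164, 204, 204, 329,
    209, 59, 248, 329, 15, 38, 78, 322, 122, 209, 122]"
  by (simp add: upt_rec) (simp add: in_common_plane_def plane_table_def)

lemma [witness_rows]: "list_all2 (in_common_plane 21) [Suc 21..<128]
    [184, 157, 337, 184, 184, 63, 1, 345, 36, 110, 345, 157, 1, 157, 36, 354, 134, 215, 345, 80,
    242, 1, 233, 350, 26, 36, 354, 36, 215, 134, 157, 345, 157, 1, 350, 233, 36, 26, 80, 345, 1,
    242, 340, 110, 134, 242, 215, 340, 233, 80, 354, 163, 117, 110, 26, 350, 117, 163, 340, 215,
    80, 233, 110, 340, 242, 134, 350, 26, 163, 117, 163, 354, 110, 117, 350, 63, 26, 215, 134,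
    337, 204, 204, 337, 242, 233, 75, 75, 354, 80, 63, 337, 134, 204, 204, 63, 350, 215, 26,
    354, 75, 63, 80, 242, 337, 75, 233]"
  by (simp add: upt_rec) (simp add: in_common_plane_def plane_table_def)

lemma [witness_rows]: "list_all2 (in_common_plane 22) [Suc 22..<128]
    [34, 373, 184, 184, 67, 53, 224, 361, 84, 366, 217, 67, 206, 206, 109, 373, 53, 373, 175,
    12, 150, 129, 53, 358, 67, 373, 53, 206, 109, 67, 206, 366, 217, 358, 67, 129, 53, 12, 150,
    373, 175, 361, 247, 27, 84, 150, 247, 358, 27, 361, 129, 84, 12, 217, 175, 366, 109, 358,
    27, 150, 247, 27, 84, 361, 247, 366, 109, 217, 175, 84, 12, 361, 129, 368, 12, 34, 34, 175,
    129, 368, 224, 358, 122, 109, 122, 224, 217, 366, 150, 368, 224, 175, 129, 34, 34, 368, 12,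
    366, 150, 224, 217, 109, 122, 358, 122]"
  by (simp add: upt_rec) (simp add: in_common_plane_def plane_table_def)

lemma [witness_rows]: "list_all2 (in_common_plane 23) [Suc 23..<128]
    [385, 139, 250, 14, 105, 177, 69, 377, 385, 157, 24, 157, 250, 83, 83, 394, 390, 250, 52,
    167, 192, 127, 52, 385, 394, 83, 83, 250, 157, 24, 157, 385, 385, 52, 127, 192, 167, 52,
    250, 390, 390, 127, 167, 236, 139, 236, 177, 394, 380, 24, 139, 214, 177, 192, 214, 380,
    394, 177, 236, 139, 236, 167, 127, 390, 380, 214, 192, 177, 214, 139, 24, 380, 394, 192, 34,
    34, 69, 105, 14, 377, 390, 167, 14, 24, 127, 69, 105, 377, 377, 14, 105, 69, 34, 34, 192,
    394, 377, 105, 69, 127, 24, 14, 167, 390]"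
  by (simp add: upt_rec) (simp add: in_common_plane_def plane_table_def)

lemma [witness_rows]: "list_all2 (in_common_plane 24) [Suc 24..<128]
    [272, 288, 300, 328, 336, 372, 384, 384, 273, 290, 302, 330, 338, 373, 384, 372, 273, 291,
    303, 331, 339, 372, 385, 372, 273, 291, 303, 331, 339, 372, 385, 384, 273, 290, 302, 330,
    338, 373, 384, 288, 274, 288, 301, 330, 339, 374, 386, 300, 274, 289, 300, 331, 338, 375,
    387, 300, 274, 289, 300, 331, 338, 375, 387, 288, 274, 288, 301, 330, 339, 374, 386, 328,
    275, 290, 303, 328, 337, 375, 386, 336, 275, 291, 302, 329, 336, 374, 387, 336, 275, 291,
    302, 329, 336, 374, 387, 328, 275, 290, 303, 328, 337, 375, 386]"
  by (simp add: upt_rec) (simp add: in_common_plane_def plane_table_def)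

lemma [witness_rows]: "list_all2 (in_common_plane 25) [Suc 25..<128]
    [184, 33, 116, 222, 169, 154, 259, 271, 222, 71, 101, 207, 222, 237, 267, 263, 169, 48, 3,
    169, 207, 252, 263, 267, 48, 169, 169, 3, 252, 207, 271, 259, 71, 222, 207, 101, 237, 222,
    271, 263, 252, 101, 139, 33, 18, 33, 267, 259, 139, 18, 237, 71, 3, 48, 259, 267, 18, 139,
    71, 237, 48, 3, 263, 271, 101, 252, 33, 139, 33, 18, 267, 271, 3, 154, 48, 154, 86, 101,
    263, 259, 116, 237, 86, 252, 71, 116, 259, 263, 237, 116, 252, 86, 116, 71, 271, 267, 154,
    3, 154, 48, 101, 86]"
  by (simp add: upt_rec) (simp add: in_common_plane_def plane_table_def)

lemma [witness_rows]: "list_all2 (in_common_plane 26) [Suc 26..<128]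
    [153, 194, 103, 29, 37, 285, 4, 279, 37, 250, 60, 37, 126, 283, 250, 285, 219, 95, 227, 128,
    161, 285, 219, 283, 250, 128, 161, 95, 227, 279, 37, 285, 4, 37, 126, 250, 60, 288, 128,
    288, 161, 227, 4, 60, 70, 279, 126, 283, 95, 70, 219, 153, 153, 283, 95, 279, 126, 153, 153,
    70, 219, 288, 161, 288, 128, 60, 70, 227, 4, 293, 29, 283, 60, 4, 29, 219, 95, 293, 227,
    279, 194, 161, 194, 126, 128, 279, 194, 293, 227, 126, 128, 161, 194, 283, 60, 293, 29, 219,
    95, 4, 29]"
  by (simp add: upt_rec) (simp add: in_common_plane_def plane_table_def)

lemma [witness_rows]: "list_all2 (in_common_plane 27) [Suc 27..<128]
    [93, 251, 135, 182, 311, 251, 67, 305, 16, 212, 168, 251, 299, 114, 202, 305, 168, 16, 108,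
    67, 305, 202, 114, 299, 67, 108, 16, 168, 305, 67, 251, 311, 251, 168, 212, 16, 311, 93,
    229, 299, 202, 33, 93, 33, 300, 212, 108, 300, 114, 229, 153, 153, 300, 108, 212, 300, 153,
    153, 229, 114, 299, 229, 93, 311, 33, 93, 33, 202, 311, 63, 135, 313, 108, 114, 14, 135,
    313, 182, 14, 299, 212, 182, 202, 63, 299, 14, 182, 313, 63, 202, 182, 212, 313, 135, 63,
    311, 135, 14, 114, 108]"
  by (simp add: upt_rec) (simp add: in_common_plane_def plane_table_def)

lemma [witness_rows]: "list_all2 (in_common_plane 28) [Suc 28..<128]
    [170, 223, 235, 323, 64, 1, 131, 333, 158, 28, 53, 333, 235, 235, 1, 319, 53, 246, 183, 319,
    53, 246, 183, 333, 235, 235, 1, 333, 158, 28, 53, 323, 64, 1, 131, 319, 93, 64, 40, 325,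
    131, 93, 158, 323, 246, 170, 170, 325, 40, 183, 28, 325, 40, 183, 28, 323, 246, 170, 170,
    325, 131, 93, 158, 319, 93, 64, 40, 328, 183, 158, 64, 328, 105, 131, 246, 323, 28, 116,
    194, 319, 194, 105, 116, 319, 194, 105, 116, 323, 28, 116, 194, 328, 105, 131, 246, 328,
    183, 158, 64]"
  by (simp add: upt_rec) (simp add: in_common_plane_def plane_table_def)

lemma [witness_rows]: "list_all2 (in_common_plane 29) [Suc 29..<128]
    [124, 66, 345, 251, 222, 89, 143, 351, 222, 251, 345, 54, 45, 197, 66, 355, 66, 8, 355, 66,
    8, 66, 54, 345, 197, 45, 351, 143, 251, 222, 251, 345, 89, 222, 341, 8, 89, 54, 124, 351,
    177, 124, 355, 197, 170, 170, 177, 341, 45, 143, 341, 177, 143, 45, 197, 355, 170, 170, 351,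
    124, 124, 177, 8, 341, 54, 89, 351, 89, 197, 19, 45, 355, 148, 224, 336, 148, 54, 143, 224,
    336, 8, 19, 336, 224, 19, 8, 148, 336, 143, 54, 355, 45, 224, 148, 89, 351, 19, 197]"
  by (simp add: upt_rec) (simp add: in_common_plane_def plane_table_def)

lemma [witness_rows]: "list_all2 (in_common_plane 30) [Suc 30..<128]
    [51, 367, 200, 230, 10, 36, 241, 359, 82, 372, 190, 169, 82, 107, 169, 372, 36, 372, 36,
    107, 169, 169, 82, 372, 190, 359, 82, 36, 241, 230, 10, 367, 200, 361, 230, 190, 144, 124,
    107, 367, 124, 361, 144, 241, 200, 51, 51, 359, 10, 359, 10, 51, 51, 241, 200, 361, 144,
    367, 124, 124, 107, 190, 144, 361, 230, 369, 29, 135, 230, 69, 29, 367, 135, 359, 107, 200,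
    190, 10, 69, 369, 241, 369, 241, 10, 69, 200, 190, 359, 107, 367, 135, 69, 29, 135, 230,
    369, 29]"
  by (simp add: upt_rec) (simp add: in_common_plane_def plane_table_def)

lemma [witness_rows]: "list_all2 (in_common_plane 31) [Suc 31..<128]
    [384, 140, 199, 37, 120, 160, 37, 384, 391, 235, 235, 31, 66, 140, 66, 395, 395, 66, 140,
    66, 31, 235, 235, 391, 384, 37, 160, 120, 37, 199, 140, 384, 391, 110, 120, 84, 9, 31, 199,
    381, 381, 9, 84, 110, 51, 51, 160, 395, 395, 160, 51, 51, 110, 84, 9, 381, 381, 199, 31, 9,
    84, 120, 110, 391, 395, 209, 253, 154, 199, 154, 120, 377, 391, 182, 209, 160, 253, 182, 31,
    377, 377, 31, 182, 253, 160, 209, 182, 391, 377, 120, 154, 199, 154, 253, 209, 395]"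
  by (simp add: upt_rec) (simp add: in_common_plane_def plane_table_def)

lemma [witness_rows]: "list_all2 (in_common_plane 32) [Suc 32..<128]
    [256, 284, 308, 320, 344, 364, 384, 344, 257, 285, 309, 321, 344, 365, 385, 284, 258, 284,
    310, 322, 345, 366, 385, 384, 259, 285, 311, 323, 345, 367, 384, 308, 258, 286, 308, 321,
    346, 367, 386, 320, 259, 287, 309, 320, 346, 366, 387, 256, 256, 286, 310, 323, 347, 365,
    387, 364, 257, 287, 311, 322, 347, 364, 386, 308, 258, 286, 308, 321, 346, 367, 386, 320,
    259, 287, 309, 320, 346, 366, 387, 256, 256, 286, 310, 323, 347, 365, 387, 364, 257, 287,
    311, 322, 347, 364, 386]"
  by (simp add: upt_rec) (simp add: in_common_plane_def plane_table_def)

lemma [witness_rows]: "list_all2 (in_common_plane 33) [Suc 33..<128]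
    [98, 157, 81, 234, 191, 251, 265, 273, 21, 234, 55, 140, 174, 234, 262, 273, 140, 115, 157,
    38, 157, 217, 271, 273, 251, 4, 251, 64, 140, 200, 271, 265, 64, 191, 191, 4, 115, 55, 265,
    262, 55, 200, 217, 98, 98, 38, 256, 256, 174, 81, 115, 200, 81, 21, 262, 271, 217, 38, 21,
    174, 64, 4, 265, 271, 191, 64, 4, 191, 55, 115, 262, 265, 200, 55, 98, 217, 38, 98, 256,
    256, 81, 174, 200, 115, 21, 81, 271, 262, 38, 217, 174, 21, 4, 64]"
  by (simp add: upt_rec) (simp add: in_common_plane_def plane_table_def)

lemma [witness_rows]: "list_all2 (in_common_plane 34) [Suc 34..<128]
    [255, 57, 133, 222, 156, 281, 156, 294, 1, 156, 90, 123, 67, 284, 189, 284, 32, 67, 24, 164,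
    1, 279, 67, 290, 222, 230, 199, 1, 222, 290, 230, 294, 123, 32, 189, 199, 164, 279, 24, 294,
    133, 133, 98, 98, 123, 281, 57, 279, 164, 90, 32, 189, 57, 290, 199, 281, 90, 255, 255, 24,
    230, 294, 123, 290, 230, 199, 164, 32, 189, 294, 133, 279, 24, 98, 123, 133, 98, 279, 164,
    281, 57, 189, 57, 90, 32, 281, 90, 290, 199, 24, 230, 255, 255]"
  by (simp add: upt_rec) (simp add: in_common_plane_def plane_table_def)

lemma [witness_rows]: "list_all2 (in_common_plane 35) [Suc 35..<128]
    [206, 118, 37, 104, 297, 20, 118, 305, 118, 178, 225, 208, 305, 172, 206, 314, 157, 206,
    157, 59, 305, 37, 71, 302, 37, 10, 89, 131, 308, 59, 89, 308, 20, 131, 208, 178, 302, 178,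
    208, 314, 172, 71, 20, 10, 302, 10, 104, 297, 71, 59, 104, 225, 297, 131, 225, 314, 255,
    255, 172, 89, 308, 89, 59, 308, 178, 208, 131, 20, 314, 208, 178, 302, 10, 20, 71, 172, 297,
    104, 10, 302, 225, 104, 59, 71, 314, 225, 131, 297, 89, 172, 255, 255]"
  by (simp add: upt_rec) (simp add: in_common_plane_def plane_table_def)

lemma [witness_rows]: "list_all2 (in_common_plane 36) [Suc 36..<128]
    [187, 231, 166, 333, 250, 211, 76, 326, 16, 13, 36, 318, 36, 206, 250, 333, 206, 16, 146,
    333, 143, 36, 120, 330, 101, 250, 16, 318, 76, 120, 101, 330, 166, 166, 13, 320, 231, 146,
    231, 320, 13, 76, 143, 326, 57, 143, 81, 318, 211, 81, 57, 326, 146, 101, 211, 330, 120,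
    187, 187, 330, 166, 166, 13, 318, 76, 120, 101, 320, 13, 76, 143, 320, 231, 146, 231, 318,
    211, 81, 57, 326, 57, 143, 81, 330, 120, 187, 187, 326, 146, 101, 211]"
  by (simp add: upt_rec) (simp add: in_common_plane_def plane_table_def)

lemma [witness_rows]: "list_all2 (in_common_plane 37) [Suc 37..<128]
    [83, 25, 344, 39, 118, 234, 118, 344, 207, 234, 354, 83, 83, 109, 2, 342, 72, 207, 351, 158,
    160, 241, 207, 338, 212, 60, 342, 25, 2, 25, 72, 351, 60, 158, 354, 212, 241, 133, 133, 338,
    160, 109, 342, 160, 212, 2, 241, 338, 39, 72, 351, 109, 39, 158, 60, 354, 187, 187, 351, 72,
    158, 60, 25, 342, 25, 2, 338, 133, 109, 160, 212, 354, 133, 241, 338, 241, 72, 39, 160, 342,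
    2, 212, 354, 60, 187, 187, 109, 351, 158, 39]"
  by (simp add: upt_rec) (simp add: in_common_plane_def plane_table_def)

lemma [witness_rows]: "list_all2 (in_common_plane 38) [Suc 38..<128]
    [68, 373, 201, 145, 125, 168, 11, 362, 50, 373, 83, 83, 134, 106, 240, 370, 168, 359, 37,
    28, 222, 37, 168, 373, 222, 362, 145, 134, 191, 191, 201, 370, 106, 362, 231, 201, 231, 240,
    145, 359, 28, 359, 125, 11, 28, 50, 106, 370, 134, 364, 11, 68, 68, 125, 50, 364, 240, 370,
    106, 191, 201, 134, 191, 362, 145, 359, 28, 240, 145, 201, 231, 362, 231, 370, 134, 50, 106,
    11, 28, 359, 125, 364, 240, 125, 50, 68, 68, 364, 11]"
  by (simp add: upt_rec) (simp add: in_common_plane_def plane_table_def)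

lemma [witness_rows]: "list_all2 (in_common_plane 39) [Suc 39..<128]
    [389, 156, 176, 82, 156, 53, 35, 378, 394, 53, 215, 15, 193, 82, 138, 382, 384, 82, 251, 53,
    251, 126, 237, 384, 389, 25, 35, 25, 215, 166, 166, 394, 382, 126, 15, 35, 237, 138, 193,
    389, 394, 215, 104, 126, 176, 237, 104, 378, 382, 176, 68, 68, 138, 193, 15, 378, 394, 166,
    166, 215, 25, 35, 25, 389, 389, 193, 138, 237, 35, 15, 126, 382, 378, 104, 237, 176, 126,
    104, 215, 394, 378, 15, 193, 138, 68, 68, 176, 382]"
  by (simp add: upt_rec) (simp add: in_common_plane_def plane_table_def)

lemma [witness_rows]: "list_all2 (in_common_plane 40) [Suc 40..<128]
    [264, 280, 296, 332, 344, 372, 388, 372, 267, 283, 299, 333, 345, 372, 391, 332, 266, 282,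
    298, 332, 345, 373, 390, 388, 265, 282, 299, 334, 346, 374, 388, 264, 264, 283, 298, 335,
    346, 375, 389, 280, 267, 280, 297, 334, 347, 375, 390, 296, 266, 281, 296, 335, 347, 374,
    391, 264, 264, 283, 298, 335, 346, 375, 389, 388, 265, 282, 299, 334, 346, 374, 388, 296,
    266, 281, 296, 335, 347, 374, 391, 280, 267, 280, 297, 334, 347, 375, 390]"
  by (simp add: upt_rec) (simp add: in_common_plane_def plane_table_def)

lemma [witness_rows]: "list_all2 (in_common_plane 41) [Suc 41..<128]
    [235, 99, 156, 65, 216, 141, 263, 273, 114, 250, 54, 235, 235, 190, 270, 273, 5, 141, 80,
    141, 250, 175, 270, 263, 190, 54, 20, 201, 5, 80, 264, 264, 201, 65, 114, 175, 20, 65, 257,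
    270, 80, 216, 216, 5, 39, 114, 263, 257, 39, 175, 190, 99, 54, 99, 264, 264, 65, 201, 175,
    114, 65, 20, 263, 270, 54, 190, 201, 20, 80, 5, 257, 263, 175, 39, 99, 190, 99, 54, 270,
    257, 216, 80, 5, 216, 114, 39]"
  by (simp add: upt_rec) (simp add: in_common_plane_def plane_table_def)

lemma [witness_rows]: "list_all2 (in_common_plane 42) [Suc 42..<128]
    [136, 118, 169, 52, 111, 285, 202, 291, 169, 169, 235, 235, 45, 278, 52, 285, 87, 12, 52,
    78, 242, 291, 145, 294, 242, 202, 78, 136, 136, 278, 111, 294, 12, 111, 145, 45, 87, 280,
    78, 280, 45, 176, 211, 242, 21, 291, 176, 278, 211, 21, 12, 87, 202, 294, 12, 278, 111, 45,
    87, 111, 145, 294, 242, 291, 145, 136, 136, 202, 78, 278, 211, 291, 176, 87, 202, 21, 12,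
    280, 45, 280, 78, 242, 21, 176, 211]"
  by (simp add: upt_rec) (simp add: in_common_plane_def plane_table_def)

lemma [witness_rows]: "list_all2 (in_common_plane 43) [Suc 43..<128]
    [244, 46, 185, 234, 305, 219, 48, 303, 31, 82, 197, 1, 305, 82, 185, 315, 167, 150, 1, 185,
    309, 76, 167, 315, 150, 31, 136, 136, 303, 197, 46, 309, 46, 219, 76, 48, 303, 125, 150,
    315, 197, 167, 48, 219, 296, 244, 31, 296, 125, 99, 244, 99, 309, 46, 197, 303, 48, 76, 219,
    46, 315, 167, 76, 309, 136, 136, 31, 150, 296, 31, 244, 296, 99, 244, 99, 125, 315, 150,
    125, 303, 219, 48, 167, 197]"
  by (simp add: upt_rec) (simp add: in_common_plane_def plane_table_def)

lemma [witness_rows]: "list_all2 (in_common_plane 44) [Suc 44..<128]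
    [221, 66, 30, 319, 66, 107, 66, 331, 3, 95, 168, 332, 233, 129, 192, 332, 168, 181, 42, 319,
    42, 221, 221, 321, 107, 233, 55, 321, 129, 55, 95, 331, 192, 3, 181, 326, 95, 42, 233, 331,
    30, 30, 3, 326, 244, 192, 107, 319, 181, 244, 129, 331, 192, 3, 181, 321, 129, 55, 95, 321,
    107, 233, 55, 319, 42, 221, 221, 319, 181, 244, 129, 326, 244, 192, 107, 331, 30, 30, 3,
    326, 95, 42, 233]"
  by (simp add: upt_rec) (simp add: in_common_plane_def plane_table_def)

lemma [witness_rows]: "list_all2 (in_common_plane 45) [Suc 45..<128]
    [151, 198, 355, 53, 140, 169, 169, 339, 16, 227, 350, 248, 127, 53, 100, 343, 140, 16, 343,
    127, 221, 221, 227, 339, 100, 178, 355, 178, 46, 65, 46, 350, 248, 65, 343, 198, 11, 198,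
    90, 355, 127, 100, 350, 11, 248, 90, 151, 339, 227, 151, 350, 46, 65, 248, 178, 355, 65, 46,
    339, 227, 178, 100, 127, 343, 221, 221, 339, 151, 151, 227, 11, 350, 90, 248, 355, 90, 100,
    127, 198, 343, 198, 11]"
  by (simp add: upt_rec) (simp add: in_common_plane_def plane_table_def)

lemma [witness_rows]: "list_all2 (in_common_plane 46) [Suc 46..<128]
    [85, 372, 66, 246, 66, 128, 108, 372, 207, 358, 52, 185, 26, 207, 52, 371, 185, 362, 128,
    35, 123, 85, 85, 358, 13, 362, 246, 108, 35, 26, 13, 371, 123, 358, 108, 174, 216, 216, 246,
    365, 225, 365, 26, 225, 128, 151, 174, 371, 151, 371, 123, 26, 13, 108, 35, 362, 246, 358,
    13, 85, 85, 35, 123, 362, 128, 371, 151, 151, 174, 225, 128, 365, 26, 365, 225, 216, 246,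
    174, 216, 358, 108]"
  by (simp add: upt_rec) (simp add: in_common_plane_def plane_table_def)

lemma [witness_rows]: "list_all2 (in_common_plane 47) [Suc 47..<128]
    [395, 36, 8, 183, 67, 161, 252, 385, 385, 67, 36, 141, 121, 141, 155, 383, 388, 8, 252, 161,
    85, 85, 208, 388, 383, 111, 208, 155, 111, 121, 183, 395, 395, 198, 183, 198, 50, 30, 30,
    378, 383, 161, 155, 252, 8, 50, 121, 378, 395, 183, 121, 111, 155, 208, 111, 383, 388, 208,
    85, 85, 161, 252, 8, 388, 378, 121, 50, 8, 252, 155, 161, 383, 378, 30, 30, 50, 198, 183,
    198, 395]"
  by (simp add: upt_rec) (simp add: in_common_plane_def plane_table_def)

lemma [witness_rows]: "list_all2 (in_common_plane 48) [Suc 48..<128]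
    [260, 284, 304, 316, 352, 372, 392, 304, 261, 285, 304, 317, 353, 373, 393, 316, 263, 286,
    306, 316, 353, 374, 394, 352, 262, 287, 306, 317, 352, 375, 395, 392, 261, 286, 307, 318,
    355, 375, 392, 260, 260, 287, 307, 319, 354, 374, 393, 392, 261, 286, 307, 318, 355, 375,
    392, 260, 260, 287, 307, 319, 354, 374, 393, 316, 263, 286, 306, 316, 353, 374, 394, 352,
    262, 287, 306, 317, 352, 375, 395]"
  by (simp add: upt_rec) (simp add: in_common_plane_def plane_table_def)

lemma [witness_rows]: "list_all2 (in_common_plane 49) [Suc 49..<128]
    [83, 66, 232, 159, 113, 23, 269, 273, 36, 53, 142, 249, 96, 6, 269, 258, 159, 142, 202, 189,
    159, 249, 267, 269, 232, 249, 172, 219, 142, 232, 258, 267, 113, 96, 6, 113, 189, 219, 260,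
    260, 6, 23, 96, 23, 172, 202, 267, 258, 96, 113, 113, 6, 219, 189, 260, 260, 23, 6, 23, 96,
    202, 172, 258, 269, 142, 159, 189, 202, 249, 159, 269, 267, 249, 232, 219, 172, 232, 142]"
  by (simp add: upt_rec) (simp add: in_common_plane_def plane_table_def)

lemma [witness_rows]: "list_all2 (in_common_plane 50) [Suc 50..<128]
    [17, 180, 206, 41, 74, 277, 173, 295, 239, 17, 17, 140, 149, 291, 8, 277, 74, 215, 107, 74,
    239, 277, 246, 283, 180, 114, 180, 239, 48, 283, 215, 295, 149, 173, 246, 48, 114, 291, 41,
    295, 107, 8, 41, 149, 173, 295, 149, 283, 215, 48, 114, 173, 246, 295, 107, 291, 41, 149,
    173, 8, 41, 277, 74, 291, 8, 74, 239, 215, 107, 283, 180, 277, 246, 239, 48, 114, 180]"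
  by (simp add: upt_rec) (simp add: in_common_plane_def plane_table_def)

lemma [witness_rows]: "list_all2 (in_common_plane 51) [Suc 51..<128]
    [169, 213, 62, 92, 304, 203, 152, 304, 17, 17, 250, 228, 310, 213, 134, 299, 32, 152, 115,
    213, 303, 92, 15, 314, 152, 92, 183, 109, 303, 228, 183, 310, 115, 32, 203, 134, 299, 109,
    62, 314, 203, 228, 15, 62, 310, 183, 228, 303, 134, 203, 32, 115, 314, 62, 109, 299, 62, 15,
    228, 203, 299, 134, 213, 310, 213, 115, 152, 32, 314, 15, 92, 303, 109, 183, 92, 152]"
  by (simp add: upt_rec) (simp add: in_common_plane_def plane_table_def)

lemma [witness_rows]: "list_all2 (in_common_plane 52) [Suc 52..<128]
    [119, 157, 245, 333, 67, 94, 43, 327, 220, 119, 119, 316, 128, 2, 54, 316, 31, 43, 106, 322,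
    43, 232, 180, 331, 180, 193, 232, 327, 245, 245, 2, 331, 106, 220, 94, 327, 94, 31, 128,
    322, 193, 54, 220, 331, 106, 220, 94, 327, 245, 245, 2, 322, 193, 54, 220, 327, 94, 31, 128,
    316, 31, 43, 106, 316, 128, 2, 54, 331, 180, 193, 232, 322, 43, 232, 180]"
  by (simp add: upt_rec) (simp add: in_common_plane_def plane_table_def)

lemma [witness_rows]: "list_all2 (in_common_plane 53) [Suc 53..<128]
    [235, 132, 349, 82, 61, 73, 186, 345, 119, 119, 342, 213, 159, 161, 61, 339, 159, 213, 352,
    24, 108, 61, 240, 352, 3, 38, 342, 108, 73, 186, 132, 349, 132, 3, 349, 161, 186, 38, 73,
    339, 24, 240, 349, 132, 3, 132, 108, 342, 186, 73, 339, 73, 240, 24, 161, 349, 38, 186, 339,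
    61, 213, 159, 213, 342, 161, 159, 352, 240, 38, 3, 24, 352, 61, 108]"
  by (simp add: upt_rec) (simp add: in_common_plane_def plane_table_def)

lemma [witness_rows]: "list_all2 (in_common_plane 54) [Suc 54..<128]
    [102, 357, 7, 102, 102, 210, 179, 363, 16, 363, 179, 252, 7, 72, 210, 370, 164, 363, 197,
    179, 95, 7, 138, 366, 210, 357, 95, 113, 164, 197, 113, 370, 72, 366, 41, 62, 252, 138, 41,
    357, 62, 370, 72, 197, 113, 113, 164, 357, 95, 357, 62, 138, 41, 62, 252, 366, 41, 370, 164,
    72, 210, 252, 7, 363, 179, 366, 210, 7, 138, 179, 95, 363, 197]"
  by (simp add: upt_rec) (simp add: in_common_plane_def plane_table_def)

lemma [witness_rows]: "list_all2 (in_common_plane 55) [Suc 55..<128]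
    [385, 112, 102, 102, 207, 168, 1, 379, 391, 59, 190, 74, 227, 112, 74, 379, 382, 92, 146,
    112, 217, 92, 45, 379, 392, 245, 245, 45, 132, 59, 132, 392, 382, 146, 217, 23, 190, 23,
    227, 391, 392, 132, 59, 132, 45, 245, 245, 392, 391, 227, 23, 190, 23, 217, 146, 382, 379,
    74, 112, 227, 74, 190, 59, 391, 379, 45, 92, 217, 112, 146, 92, 382]"
  by (simp add: upt_rec) (simp add: in_common_plane_def plane_table_def)

lemma [witness_rows]: "list_all2 (in_common_plane 56) [Suc 56..<128]
    [268, 276, 304, 332, 348, 356, 384, 268, 268, 277, 306, 334, 351, 358, 386, 276, 269, 276,
    306, 335, 350, 359, 387, 356, 270, 279, 307, 334, 349, 356, 387, 348, 271, 278, 307, 335,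
    348, 357, 386, 348, 271, 278, 307, 335, 348, 357, 386, 356, 270, 279, 307, 334, 349, 356,
    387, 276, 269, 276, 306, 335, 350, 359, 387, 268, 268, 277, 306, 334, 351, 358, 386]"
  by (simp add: upt_rec) (simp add: in_common_plane_def plane_table_def)

lemma [witness_rows]: "list_all2 (in_common_plane 57) [Suc 57..<128]
    [218, 188, 37, 52, 22, 97, 268, 268, 97, 7, 97, 112, 233, 158, 266, 259, 22, 112, 7, 22,
    248, 143, 259, 261, 143, 233, 173, 188, 203, 188, 261, 266, 248, 158, 203, 218, 218, 173,
    266, 261, 158, 248, 218, 203, 173, 218, 261, 259, 233, 143, 188, 173, 188, 203, 259, 266,
    112, 22, 22, 7, 143, 248, 268, 268, 7, 97, 112, 97, 158, 233]"
  by (simp add: upt_rec) (simp add: in_common_plane_def plane_table_def)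

lemma [witness_rows]: "list_all2 (in_common_plane 58) [Suc 58..<128]
    [102, 251, 226, 195, 185, 290, 127, 282, 195, 61, 152, 5, 195, 276, 129, 276, 61, 152, 71,
    160, 28, 282, 160, 295, 28, 71, 5, 127, 94, 290, 94, 295, 226, 226, 218, 218, 129, 295, 226,
    290, 94, 218, 129, 226, 218, 295, 28, 282, 160, 127, 94, 71, 5, 276, 61, 276, 129, 160, 28,
    152, 71, 282, 195, 290, 127, 5, 195, 61, 152]"
  by (simp add: upt_rec) (simp add: in_common_plane_def plane_table_def)

lemma [witness_rows]: "list_all2 (in_common_plane 59) [Suc 59..<128]
    [147, 141, 162, 222, 311, 162, 120, 315, 162, 4, 43, 239, 302, 43, 241, 298, 26, 192, 239,
    87, 302, 147, 73, 315, 241, 188, 147, 188, 298, 26, 192, 311, 73, 120, 87, 4, 311, 192, 26,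
    298, 4, 87, 120, 73, 315, 73, 147, 302, 188, 147, 188, 241, 298, 241, 43, 302, 87, 239, 192,
    26, 315, 120, 162, 311, 239, 43, 4, 162]"
  by (simp add: upt_rec) (simp add: in_common_plane_def plane_table_def)

lemma [witness_rows]: "list_all2 (in_common_plane 60) [Suc 60..<128]
    [17, 56, 77, 317, 230, 167, 142, 330, 210, 100, 80, 323, 77, 77, 12, 317, 121, 142, 210,
    327, 147, 80, 186, 323, 167, 147, 100, 327, 56, 186, 56, 330, 12, 121, 230, 330, 12, 121,
    230, 327, 56, 186, 56, 323, 167, 147, 100, 327, 147, 80, 186, 317, 121, 142, 210, 323, 77,
    77, 12, 330, 210, 100, 80, 317, 230, 167, 142]"
  by (simp add: upt_rec) (simp add: in_common_plane_def plane_table_def)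

lemma [witness_rows]: "list_all2 (in_common_plane 61) [Suc 61..<128]
    [47, 91, 343, 179, 64, 101, 150, 353, 199, 249, 353, 126, 179, 249, 91, 338, 91, 10, 343,
    10, 150, 126, 47, 338, 220, 47, 348, 199, 101, 226, 226, 348, 64, 220, 348, 226, 220, 64,
    199, 348, 226, 101, 338, 47, 47, 220, 10, 343, 126, 150, 338, 91, 10, 91, 126, 353, 249,
    179, 353, 150, 249, 199, 179, 343, 101, 64]"
  by (simp add: upt_rec) (simp add: in_common_plane_def plane_table_def)

lemma [witness_rows]: "list_all2 (in_common_plane 62) [Suc 62..<128]
    [119, 363, 162, 89, 195, 162, 78, 367, 195, 363, 212, 22, 155, 237, 22, 371, 181, 356, 78,
    212, 96, 47, 237, 356, 47, 367, 56, 155, 56, 96, 181, 371, 89, 371, 89, 96, 181, 155, 56,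
    367, 56, 356, 47, 47, 237, 212, 96, 356, 78, 371, 181, 237, 22, 22, 155, 363, 212, 367, 195,
    162, 78, 89, 195, 363, 162]"
  by (simp add: upt_rec) (simp add: in_common_plane_def plane_table_def)

lemma [witness_rows]: "list_all2 (in_common_plane 63) [Suc 63..<128]
    [390, 42, 97, 242, 97, 131, 60, 379, 383, 77, 77, 200, 91, 175, 91, 379, 393, 228, 42, 149,
    6, 200, 242, 390, 383, 131, 6, 175, 60, 228, 149, 393, 393, 149, 228, 60, 175, 6, 131, 383,
    390, 242, 200, 6, 149, 42, 228, 393, 379, 91, 175, 91, 200, 77, 77, 383, 379, 60, 131, 97,
    242, 97, 42, 390]"
  by (simp add: upt_rec) (simp add: in_common_plane_def plane_table_def)

lemma [witness_rows]: "list_all2 (in_common_plane 64) [Suc 64..<128]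
    [268, 288, 308, 316, 340, 360, 388, 360, 269, 289, 309, 317, 341, 360, 389, 340, 270, 289,
    310, 318, 340, 361, 390, 288, 271, 288, 311, 319, 341, 361, 391, 308, 271, 290, 308, 318,
    342, 362, 389, 388, 270, 291, 309, 319, 343, 362, 388, 316, 269, 291, 310, 316, 342, 363,
    391, 268, 268, 290, 311, 317, 343, 363, 390]"
  by (simp add: upt_rec) (simp add: in_common_plane_def plane_table_def)

lemma [witness_rows]: "list_all2 (in_common_plane 65) [Suc 65..<128]
    [196, 25, 162, 247, 93, 213, 265, 274, 179, 110, 196, 145, 76, 196, 258, 274, 42, 247, 110,
    59, 127, 247, 263, 274, 93, 128, 8, 93, 110, 230, 265, 258, 59, 230, 25, 76, 25, 145, 263,
    265, 76, 145, 127, 42, 8, 128, 258, 263, 213, 8, 213, 128, 59, 179, 268, 268, 162, 127, 179,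
    230, 42, 162]"
  by (simp add: upt_rec) (simp add: in_common_plane_def plane_table_def)

lemma [witness_rows]: "list_all2 (in_common_plane 66) [Suc 66..<128]
    [221, 97, 58, 159, 27, 277, 58, 294, 35, 196, 229, 58, 196, 282, 27, 286, 2, 27, 167, 229,
    134, 288, 229, 288, 252, 190, 120, 64, 89, 294, 89, 286, 64, 134, 35, 120, 2, 294, 167, 282,
    190, 35, 252, 221, 221, 277, 134, 286, 159, 252, 190, 2, 159, 282, 120, 277, 97, 89, 97,
    167, 64]"
  by (simp add: upt_rec) (simp add: in_common_plane_def plane_table_def)

lemma [witness_rows]: "list_all2 (in_common_plane 67) [Suc 67..<128]
    [191, 236, 74, 195, 301, 144, 84, 306, 7, 40, 142, 123, 301, 40, 236, 315, 236, 84, 242,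
    144, 299, 161, 101, 301, 84, 144, 54, 40, 308, 123, 191, 308, 25, 191, 25, 101, 315, 242,
    54, 299, 161, 123, 221, 221, 299, 74, 142, 306, 74, 7, 161, 54, 315, 195, 7, 306, 242, 195,
    101, 142]"
  by (simp add: upt_rec) (simp add: in_common_plane_def plane_table_def)

lemma [witness_rows]: "list_all2 (in_common_plane 68) [Suc 68..<128]
    [85, 254, 124, 321, 9, 139, 61, 325, 254, 20, 254, 325, 215, 150, 139, 334, 32, 9, 72, 325,
    124, 124, 9, 330, 139, 227, 202, 330, 72, 191, 215, 321, 191, 32, 20, 321, 227, 85, 85, 334,
    20, 202, 150, 316, 61, 72, 227, 316, 202, 215, 32, 330, 150, 162, 97, 334, 97, 61, 162]"
  by (simp add: upt_rec) (simp add: in_common_plane_def plane_table_def)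

lemma [witness_rows]: "list_all2 (in_common_plane 69) [Suc 69..<128]
    [166, 33, 353, 58, 201, 112, 152, 346, 58, 210, 340, 78, 236, 247, 236, 340, 189, 247, 351,
    131, 31, 107, 33, 339, 33, 4, 351, 166, 166, 201, 4, 346, 131, 189, 339, 107, 85, 85, 201,
    346, 31, 78, 339, 31, 112, 210, 189, 353, 152, 107, 353, 210, 131, 78, 112, 351, 4, 152]"
  by (simp add: upt_rec) (simp add: in_common_plane_def plane_table_def)

lemma [witness_rows]: "list_all2 (in_common_plane 70) [Suc 70..<128]
    [136, 360, 43, 208, 18, 177, 254, 360, 254, 358, 177, 18, 233, 115, 5, 370, 100, 367, 199,
    93, 177, 60, 93, 374, 18, 370, 166, 166, 60, 199, 208, 367, 115, 358, 208, 233, 100, 136,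
    136, 374, 5, 370, 74, 43, 159, 74, 115, 374, 159, 367, 60, 100, 199, 5, 43, 358, 233]"
  by (simp add: upt_rec) (simp add: in_common_plane_def plane_table_def)

lemma [witness_rows]: "list_all2 (in_common_plane 71) [Suc 71..<128]
    [381, 178, 55, 249, 70, 13, 239, 379, 394, 27, 80, 164, 27, 106, 70, 381, 381, 124, 124,
    158, 33, 70, 33, 386, 394, 106, 158, 13, 178, 164, 55, 386, 388, 13, 178, 55, 136, 136, 80,
    388, 379, 164, 213, 106, 213, 239, 249, 394, 379, 195, 249, 80, 239, 195, 158, 386]"
  by (simp add: upt_rec) (simp add: in_common_plane_def plane_table_def)

lemma [witness_rows]: "list_all2 (in_common_plane 72) [Suc 72..<128]
    [264, 276, 300, 320, 352, 360, 380, 300, 267, 279, 300, 323, 355, 361, 381, 380, 266, 278,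
    301, 322, 354, 361, 380, 264, 264, 278, 303, 321, 355, 362, 383, 320, 265, 279, 302, 320,
    354, 362, 382, 276, 266, 276, 302, 323, 353, 363, 383, 352, 267, 277, 303, 322, 352, 363,
    382]"
  by (simp add: upt_rec) (simp add: in_common_plane_def plane_table_def)

lemma [witness_rows]: "list_all2 (in_common_plane 73) [Suc 73..<128]
    [77, 231, 111, 92, 58, 163, 259, 274, 212, 126, 197, 246, 9, 144, 262, 274, 163, 9, 163,
    144, 24, 129, 264, 264, 197, 111, 178, 129, 111, 246, 262, 259, 178, 24, 212, 231, 126, 231,
    259, 269, 43, 129, 126, 77, 77, 212, 269, 262, 92, 246, 24, 43, 92, 197]"
  by (simp add: upt_rec) (simp add: in_common_plane_def plane_table_def)

lemma [witness_rows]: "list_all2 (in_common_plane 74) [Suc 74..<128]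
    [170, 46, 22, 117, 232, 283, 108, 289, 139, 241, 84, 170, 170, 289, 146, 287, 117, 84, 139,
    15, 117, 294, 46, 283, 201, 108, 208, 55, 46, 294, 208, 287, 55, 201, 15, 146, 241, 276,
    241, 276, 22, 22, 77, 77, 179, 283, 15, 287, 232, 179, 146, 232, 108]"
  by (simp add: upt_rec) (simp add: in_common_plane_def plane_table_def)

lemma [witness_rows]: "list_all2 (in_common_plane 75) [Suc 75..<128]
    [133, 180, 214, 65, 300, 95, 18, 300, 110, 200, 170, 170, 298, 214, 155, 314, 214, 12, 110,
    18, 309, 12, 65, 298, 155, 35, 65, 95, 314, 133, 200, 309, 35, 231, 133, 231, 298, 61, 112,
    306, 200, 155, 249, 12, 314, 180, 249, 306, 112, 95, 61, 180]"
  by (simp add: upt_rec) (simp add: in_common_plane_def plane_table_def)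

lemma [witness_rows]: "list_all2 (in_common_plane 76) [Suc 76..<128]
    [51, 91, 196, 325, 177, 51, 51, 331, 237, 70, 114, 325, 26, 217, 177, 335, 70, 172, 240,
    331, 46, 26, 111, 335, 114, 111, 46, 320, 133, 240, 237, 320, 217, 133, 172, 317, 91, 237,
    91, 335, 7, 152, 26, 331, 240, 7, 217, 317, 172, 114, 152]"
  by (simp add: upt_rec) (simp add: in_common_plane_def plane_table_def)

lemma [witness_rows]: "list_all2 (in_common_plane 77) [Suc 77..<128]
    [98, 254, 341, 40, 51, 51, 71, 338, 229, 219, 350, 229, 192, 175, 138, 341, 121, 40, 350,
    192, 121, 13, 175, 346, 219, 145, 338, 13, 138, 145, 98, 346, 71, 98, 338, 121, 175, 22, 22,
    350, 192, 71, 352, 180, 92, 138, 219, 352, 92, 180]"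
  by (simp add: upt_rec) (simp add: in_common_plane_def plane_table_def)

lemma [witness_rows]: "list_all2 (in_common_plane 78) [Suc 78..<128]
    [153, 359, 160, 183, 45, 153, 153, 375, 3, 366, 214, 248, 117, 214, 193, 371, 117, 371, 183,
    3, 248, 45, 76, 375, 20, 359, 193, 76, 160, 98, 20, 366, 98, 371, 91, 142, 91, 160, 239,
    359, 248, 366, 45, 193, 3, 239, 183, 375, 142]"
  by (simp add: upt_rec) (simp add: in_common_plane_def plane_table_def)

lemma [witness_rows]: "list_all2 (in_common_plane 79) [Suc 79..<128]
    [395, 10, 143, 28, 153, 153, 48, 387, 380, 109, 163, 38, 163, 181, 87, 380, 395, 123, 65,
    181, 48, 87, 65, 389, 389, 28, 109, 143, 10, 123, 38, 387, 379, 181, 10, 210, 87, 28, 143,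
    387, 379, 210, 38, 232, 109, 48, 232, 395]"
  by (simp add: upt_rec) (simp add: in_common_plane_def plane_table_def)

lemma [witness_rows]: "list_all2 (in_common_plane 80) [Suc 80..<128]
    [256, 280, 300, 324, 340, 356, 392, 324, 257, 281, 301, 324, 341, 357, 393, 392, 258, 283,
    303, 327, 342, 357, 392, 356, 259, 282, 302, 327, 343, 356, 393, 256, 256, 281, 302, 326,
    342, 359, 394, 280, 257, 280, 303, 326, 343, 358, 395]"
  by (simp add: upt_rec) (simp add: in_common_plane_def plane_table_def)

lemma [witness_rows]: "list_all2 (in_common_plane 81) [Suc 81..<128]
    [245, 198, 27, 130, 147, 57, 261, 274, 130, 177, 125, 228, 130, 40, 267, 261, 228, 215, 108,
    245, 245, 95, 261, 270, 147, 160, 10, 147, 228, 78, 256, 256, 10, 57, 160, 57, 215, 125,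
    270, 267, 125, 78, 198, 95, 198, 108]"
  by (simp add: upt_rec) (simp add: in_common_plane_def plane_table_def)

lemma [witness_rows]: "list_all2 (in_common_plane 82) [Suc 82..<128]
    [51, 236, 113, 104, 205, 289, 11, 295, 205, 73, 174, 205, 18, 295, 183, 286, 113, 113, 245,
    245, 73, 295, 73, 279, 143, 212, 42, 80, 150, 279, 104, 286, 174, 11, 104, 143, 212, 280,
    150, 280, 80, 174, 183, 42, 11]"
  by (simp add: upt_rec) (simp add: in_common_plane_def plane_table_def)

lemma [witness_rows]: "list_all2 (in_common_plane 83) [Suc 83..<128]
    [216, 79, 81, 247, 297, 79, 186, 307, 96, 139, 149, 79, 310, 149, 96, 307, 45, 164, 186, 2,
    315, 28, 233, 307, 149, 96, 126, 186, 297, 164, 81, 310, 126, 28, 2, 81, 315, 45, 216, 297,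
    198, 216, 198, 233]"
  by (simp add: upt_rec) (simp add: in_common_plane_def plane_table_def)

lemma [witness_rows]: "list_all2 (in_common_plane 84) [Suc 84..<128]
    [153, 132, 47, 324, 176, 6, 90, 324, 50, 110, 173, 331, 132, 197, 132, 318, 6, 173, 115,
    323, 47, 47, 6, 334, 173, 71, 241, 318, 241, 50, 176, 323, 115, 90, 71, 331, 90, 216, 50,
    334, 216, 176, 197]"
  by (simp add: upt_rec) (simp add: in_common_plane_def plane_table_def)

lemma [witness_rows]: "list_all2 (in_common_plane 85) [Suc 85..<128]
    [30, 188, 349, 79, 130, 211, 84, 347, 130, 79, 349, 106, 59, 113, 113, 355, 32, 246, 338,
    167, 200, 237, 188, 349, 188, 5, 338, 211, 237, 106, 200, 347, 59, 32, 355, 30, 30, 246, 5,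
    347, 167, 211]"
  by (simp add: upt_rec) (simp add: in_common_plane_def plane_table_def)

lemma [witness_rows]: "list_all2 (in_common_plane 86) [Suc 86..<128]
    [170, 365, 229, 39, 9, 203, 70, 361, 220, 370, 132, 220, 132, 48, 203, 375, 189, 356, 242,
    147, 220, 127, 147, 356, 203, 370, 104, 81, 39, 189, 104, 365, 81, 365, 30, 30, 127, 242,
    48, 375, 39]"
  by (simp add: upt_rec) (simp add: in_common_plane_def plane_table_def)

lemma [witness_rows]: "list_all2 (in_common_plane 87) [Suc 87..<128]
    [381, 94, 225, 205, 21, 144, 205, 378, 392, 72, 3, 94, 134, 114, 219, 392, 390, 47, 47, 100,
    188, 94, 188, 387, 378, 134, 72, 57, 225, 57, 21, 387, 378, 225, 100, 3, 219, 21, 114, 390]"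
  by (simp add: upt_rec) (simp add: in_common_plane_def plane_table_def)

lemma [witness_rows]: "list_all2 (in_common_plane 88) [Suc 88..<128]
    [260, 288, 296, 324, 348, 364, 380, 348, 261, 290, 298, 327, 348, 367, 383, 260, 260, 291,
    299, 327, 349, 366, 382, 296, 263, 291, 296, 326, 350, 365, 383, 364, 262, 290, 297, 326,
    351, 364, 382]"
  by (simp add: upt_rec) (simp add: in_common_plane_def plane_table_def)

lemma [witness_rows]: "list_all2 (in_common_plane 89) [Suc 89..<128]
    [124, 56, 214, 41, 244, 79, 266, 271, 26, 94, 199, 56, 131, 56, 260, 260, 109, 41, 161, 94,
    146, 41, 257, 266, 244, 176, 11, 244, 161, 26, 271, 257, 131, 199, 109, 146, 176, 11]"
  by (simp add: upt_rec) (simp add: in_common_plane_def plane_table_def)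

lemma [witness_rows]: "list_all2 (in_common_plane 90) [Suc 90..<128]
    [68, 163, 93, 130, 62, 295, 192, 278, 248, 155, 6, 186, 101, 295, 62, 287, 6, 62, 217, 31,
    186, 278, 31, 281, 39, 225, 155, 192, 248, 281, 225, 287, 217, 68, 68, 101, 39]"
  by (simp add: upt_rec) (simp add: in_common_plane_def plane_table_def)

lemma [witness_rows]: "list_all2 (in_common_plane 91) [Suc 91..<128]
    [226, 23, 205, 117, 311, 226, 158, 307, 175, 56, 226, 56, 314, 107, 23, 307, 23, 252, 38,
    128, 296, 211, 175, 296, 252, 128, 90, 107, 314, 90, 38, 311, 68, 68, 158, 211]"
  by (simp add: upt_rec) (simp add: in_common_plane_def plane_table_def)

lemma [witness_rows]: "list_all2 (in_common_plane 92) [Suc 92..<128]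
    [255, 33, 151, 330, 226, 96, 60, 335, 203, 226, 73, 322, 73, 138, 190, 319, 96, 8, 203, 319,
    151, 151, 8, 335, 190, 21, 125, 330, 60, 125, 138, 322, 21, 255, 255]"
  by (simp add: upt_rec) (simp add: in_common_plane_def plane_table_def)

lemma [witness_rows]: "list_all2 (in_common_plane 93) [Suc 93..<128]
    [218, 99, 348, 12, 228, 181, 218, 348, 120, 218, 339, 193, 23, 41, 23, 354, 228, 41, 339,
    181, 50, 174, 99, 347, 99, 12, 354, 120, 193, 50, 174, 347, 255, 255]"
  by (simp add: upt_rec) (simp add: in_common_plane_def plane_table_def)

lemma [witness_rows]: "list_all2 (in_common_plane 94) [Suc 94..<128]
    [187, 371, 149, 121, 64, 218, 87, 357, 218, 357, 227, 54, 24, 149, 15, 374, 172, 371, 121,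
    244, 227, 87, 244, 374, 54, 364, 15, 187, 187, 24, 172, 364, 64]"
  by (simp add: upt_rec) (simp add: in_common_plane_def plane_table_def)

lemma [witness_rows]: "list_all2 (in_common_plane 95) [Suc 95..<128]
    [393, 89, 220, 230, 4, 129, 173, 386, 391, 62, 240, 220, 62, 173, 202, 393, 378, 151, 151,
    129, 99, 202, 99, 391, 378, 240, 187, 187, 89, 230, 4, 386]"
  by (simp add: upt_rec) (simp add: in_common_plane_def plane_table_def)

lemma [witness_rows]: "list_all2 (in_common_plane 96) [Suc 96..<128]
    [264, 292, 308, 328, 348, 368, 392, 292, 265, 292, 309, 329, 349, 369, 393, 368, 266, 293,
    310, 329, 350, 368, 394, 328, 267, 293, 311, 328, 351, 369, 395]"
  by (simp add: upt_rec) (simp add: in_common_plane_def plane_table_def)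

lemma [witness_rows]: "list_all2 (in_common_plane 97) [Suc 97..<128]
    [166, 132, 243, 29, 226, 46, 261, 275, 209, 243, 149, 123, 243, 63, 258, 275, 72, 106, 63,
    209, 192, 12, 271, 275, 63, 29, 89, 183, 209, 29]"
  by (simp add: upt_rec) (simp add: in_common_plane_def plane_table_def)

lemma [witness_rows]: "list_all2 (in_common_plane 98) [Suc 98..<128]
    [34, 88, 191, 65, 135, 292, 88, 292, 220, 253, 96, 228, 88, 278, 121, 286, 253, 34, 34, 59,
    26, 283, 135, 290, 3, 135, 253, 158, 197]"
  by (simp add: upt_rec) (simp add: in_common_plane_def plane_table_def)

lemma [witness_rows]: "list_all2 (in_common_plane 99) [Suc 99..<128]
    [113, 154, 111, 171, 313, 13, 171, 307, 201, 94, 171, 19, 298, 181, 19, 313, 34, 34, 215,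
    248, 313, 60, 154, 303, 154, 230, 19, 64]"
  by (simp add: upt_rec) (simp add: in_common_plane_def plane_table_def)

lemma [witness_rows]: "list_all2 (in_common_plane 100) [Suc 100..<128]
    [238, 25, 218, 321, 88, 178, 243, 327, 69, 243, 88, 318, 134, 175, 69, 335, 155, 238, 238,
    328, 45, 69, 199, 328, 48, 4, 108]"
  by (simp add: upt_rec) (simp add: in_common_plane_def plane_table_def)

lemma [witness_rows]: "list_all2 (in_common_plane 101) [Suc 101..<128]
    [245, 56, 337, 208, 76, 6, 35, 346, 105, 203, 337, 164, 105, 129, 87, 342, 238, 238, 355,
    105, 154, 29, 154, 337, 114, 29]"
  by (simp add: upt_rec) (simp add: in_common_plane_def plane_table_def)

lemma [witness_rows]: "list_all2 (in_common_plane 102) [Suc 102..<128]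
    [204, 357, 148, 14, 55, 86, 173, 362, 186, 368, 14, 204, 204, 148, 86, 368, 32, 367, 120,
    131, 148, 219, 14, 375, 86]"
  by (simp add: upt_rec) (simp add: in_common_plane_def plane_table_def)

lemma [witness_rows]: "list_all2 (in_common_plane 103) [Suc 103..<128]
    [389, 73, 171, 145, 224, 20, 171, 377, 377, 224, 204, 204, 189, 115, 2, 383, 377, 135, 224,
    246, 135, 95, 101, 386]"
  by (simp add: upt_rec) (simp add: in_common_plane_def plane_table_def)

lemma [witness_rows]: "list_all2 (in_common_plane 104) [Suc 104..<128]
    [260, 292, 312, 320, 336, 356, 388, 336, 263, 293, 313, 323, 336, 359, 391, 312, 262, 293,
    312, 322, 337, 358, 390]"
  by (simp add: upt_rec) (simp add: in_common_plane_def plane_table_def)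

lemma [witness_rows]: "list_all2 (in_common_plane 105) [Suc 105..<128]
    [47, 122, 62, 182, 133, 88, 259, 275, 182, 227, 148, 28, 182, 107, 270, 275, 193, 148, 242,
    122, 167, 122]"
  by (simp add: upt_rec) (simp add: in_common_plane_def plane_table_def)

lemma [witness_rows]: "list_all2 (in_common_plane 106) [Suc 106..<128]
    [85, 23, 147, 171, 116, 279, 14, 291, 116, 200, 209, 116, 54, 282, 240, 287, 138, 109, 14,
    209, 233]"
  by (simp add: upt_rec) (simp add: in_common_plane_def plane_table_def)

lemma [witness_rows]: "list_all2 (in_common_plane 107) [Suc 107..<128]
    [75, 194, 243, 41, 299, 194, 237, 302, 160, 190, 143, 194, 312, 75, 100, 312, 24, 122, 75,
    122]"
  by (simp add: upt_rec) (simp add: in_common_plane_def plane_table_def)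

lemma [witness_rows]: "list_all2 (in_common_plane 108) [Suc 108..<128]
    [136, 188, 98, 319, 224, 10, 253, 329, 86, 161, 212, 329, 75, 224, 127, 334, 253, 75, 86]"
  by (simp add: upt_rec) (simp add: in_common_plane_def plane_table_def)

lemma [witness_rows]: "list_all2 (in_common_plane 109) [Suc 109..<128]
    [49, 231, 336, 194, 182, 69, 252, 336, 182, 194, 354, 15, 69, 217, 49, 343, 42, 49]"
  by (simp add: upt_rec) (simp add: in_common_plane_def plane_table_def)

lemma [witness_rows]: "list_all2 (in_common_plane 110) [Suc 110..<128]
    [221, 369, 31, 105, 8, 126, 202, 374, 71, 366, 105, 38, 80, 49, 146, 369, 49]"
  by (simp add: upt_rec) (simp add: in_common_plane_def plane_table_def)

lemma [witness_rows]: "list_all2 (in_common_plane 111) [Suc 111..<128]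
    [377, 241, 19, 116, 63, 128, 116, 387, 377, 150, 63, 78, 5, 172, 19, 382]"
  by (simp add: upt_rec) (simp add: in_common_plane_def plane_table_def)

lemma [witness_rows]: "list_all2 (in_common_plane 112) [Suc 112..<128]
    [256, 276, 296, 316, 336, 368, 376, 376, 257, 277, 297, 317, 337, 369, 376]"
  by (simp add: upt_rec) (simp add: in_common_plane_def plane_table_def)

lemma [witness_rows]: "list_all2 (in_common_plane 113) [Suc 113..<128]
    [151, 91, 74, 104, 44, 194, 269, 275, 224, 44, 44, 14, 61, 211]"
  by (simp add: upt_rec) (simp add: in_common_plane_def plane_table_def)

lemma [witness_rows]: "list_all2 (in_common_plane 114) [Suc 114..<128]
    [204, 213, 244, 182, 81, 281, 105, 293, 50, 112, 43, 19, 142]"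
  by (simp add: upt_rec) (simp add: in_common_plane_def plane_table_def)

lemma [witness_rows]: "list_all2 (in_common_plane 115) [Suc 115..<128]
    [22, 57, 116, 159, 313, 210, 69, 306, 174, 253, 176, 39]"
  by (simp add: upt_rec) (simp add: in_common_plane_def plane_table_def)

lemma [witness_rows]: "list_all2 (in_common_plane 116) [Suc 116..<128]
    [34, 99, 137, 329, 225, 63, 148, 326, 137, 137, 11]"
  by (simp add: upt_rec) (simp add: in_common_plane_def plane_table_def)

lemma [witness_rows]: "list_all2 (in_common_plane 117) [Suc 117..<128]
    [77, 165, 353, 165, 7, 165, 239, 347, 209, 86]"
  by (simp add: upt_rec) (simp add: in_common_plane_def plane_table_def)

lemma [witness_rows]: "list_all2 (in_common_plane 118) [Suc 118..<128]
    [238, 365, 90, 249, 44, 44, 21, 363, 152]"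
  by (simp add: upt_rec) (simp add: in_common_plane_def plane_table_def)

lemma [witness_rows]: "list_all2 (in_common_plane 119) [Suc 119..<128]
    [376, 165, 125, 165, 179, 137, 137, 376]"
  by (simp add: upt_rec) (simp add: in_common_plane_def plane_table_def)

lemma [witness_rows]: "list_all2 (in_common_plane 120) [Suc 120..<128]
    [268, 280, 312, 328, 352, 364, 376]"
  by (simp add: upt_rec) (simp add: in_common_plane_def plane_table_def)

lemma [witness_rows]: "list_all2 (in_common_plane 121) [Suc 121..<128]
    [30, 165, 135, 195, 75, 180]"
  by (simp add: upt_rec) (simp add: in_common_plane_def plane_table_def)

lemma [witness_rows]: "list_all2 (in_common_plane 122) [Suc 122..<128]
    [187, 154, 216, 92, 162]"
  by (simp add: upt_rec) (simp add: in_common_plane_def plane_table_def)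

lemma [witness_rows]: "list_all2 (in_common_plane 123) [Suc 123..<128]
    [44, 97, 232, 29]"
  by (simp add: upt_rec) (simp add: in_common_plane_def plane_table_def)

lemma [witness_rows]: "list_all2 (in_common_plane 124) [Suc 124..<128]
    [68, 198, 49]"
  by (simp add: upt_rec) (simp add: in_common_plane_def plane_table_def)

lemma [witness_rows]: "list_all2 (in_common_plane 125) [Suc 125..<128]
    [137, 122]"
  by (simp add: upt_rec) (simp add: in_common_plane_def plane_table_def)

lemma [witness_rows]: "list_all2 (in_common_plane 126) [Suc 126..<128]
    [255]"
  by (simp add: upt_rec) (simp add: in_common_plane_def plane_table_def)


definition row_covered :: "nat \<Rightarrow> bool" where
  "row_covered m \<longleftrightarrow> (\<forall>n. m < n \<and> n < 128 \<longrightarrow> (\<exists>j. in_common_plane m n j))"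

lemma row_coveredI:
  assumes "list_all2 (in_common_plane m) [Suc m..<128] ws"
  shows "row_covered m"
  unfolding row_covered_def
proof (intro allI impI)
  fix n assume "m < n \<and> n < 128"
  then obtain i where i: "i < length [Suc m..<128]" "[Suc m..<128] ! i = n"
    by (metis atLeastLessThan_iff in_set_conv_nth less_eq_Suc_le set_upt)
  show "\<exists>j. in_common_plane m n j" using list_all2_nthD[OF assms i(1)] i(2) by blast
qed

text \<open>Row 127 is empty, so the certificate rows cover all pairs of nonzero numbers.\<close>

lemma all_rows_covered: "list_all row_covered (1 # [2..<127])"
  using witness_rows[THEN row_coveredI] by simp

lemma numbers_in_common_plane:
  assumes "0 < m" "m < n" "n < 128"
  shows "\<exists>j<396. m \<in> set (plane_table j) \<and> n \<in> set (plane_table j)"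
proof -
  have "m \<in> set (1 # [2..<127])" using assms by (auto simp del: upt_rec_numeral)
  then have "row_covered m" using all_rows_covered unfolding list_all_iff by blast
  then show ?thesis using assms unfolding row_covered_def in_common_plane_def by blast
qed

lemma vectors_in_common_plane:
  assumes "x \<noteq> 0" "y \<noteq> 0" "x \<noteq> y"
  shows "\<exists>j<396. x \<in> plane j \<and> y \<in> plane j"
proof -
  obtain m n where mn: "m < 128" "n < 128" "vec_of_nat m = x" "vec_of_nat n = y"
    using vec_of_nat_surj by metis
  then have "m \<noteq> 0" "n \<noteq> 0" "m \<noteq> n" using assms vec_of_nat_0 by metis+
  then obtain j where "j < 396" "m \<in> set (plane_table j)" "n \<in> set (plane_table j)"
    using numbers_in_common_plane[of m n] numbers_in_common_plane[of n m] mn(1,2)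
    by (metis linorder_neqE_nat not_gr0)
  then show ?thesis using plane_contains mn(3,4) by blast
qed

theorem mainTheorem9:
  shows "covering_number TYPE(bit) TYPE(7) 3 2 \<le> 396"
proof -
  define F where "F = plane ` {..<396}"
  have "card F \<le> 396"
    unfolding F_def using card_image_le[of "{..<396::nat}" plane] by simp
  moreover have "covering_number TYPE(bit) TYPE(7) 3 2 \<le> card F"
  proof (rule covering_number_2_le_card)
    show "finite F" by (simp add: F_def)
    show "\<forall>U\<in>F. vec.subspace U \<and> vec.dim U = 3"
      using plane_subspace by (auto simp: F_def)
    show "\<exists>U\<in>F. x \<in> U \<and> y \<in> U" if "x \<noteq> 0" "y \<noteq> 0" "x \<noteq> y" for x y :: "bit ^ 7"
      using vectors_in_common_plane[OF that] by (auto simp: F_def)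
  qed
  ultimately show ?thesis by linarith
qed

end
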